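(* Consider problem (P) and suppose Assumptions A, B, C and D hold. Let $\{(x^t,L_g^t)\}$ be generated by SCP$_{ls}$. Then there exist $\kappa>0$ and $\underline t\in\mathbb N_+$ such that ${\rm dist}(0,\partial\bar F(x^{t+1},x^t,L_g^t))\le\kappa\|x^{t+1}-x^t\|$ for all $t>\underline t$.
   Context: Problem (P): $\min_{x\in\mathbb R^n}F(x):=f(x)+P_1(x)-P_2(x)+\delta_{\{g\le 0\}}(x)$, where $f:\mathbb R^n\to\mathbb R$ is continuously differentiable, $P_1,P_2:\mathbb R^n\to\mathbb R$ are convex and continuous, $g=(g_1,\dots,g_m):\mathbb R^n\to\mathbb R^m$ is continuous with $\{x:g(x)\le0\}\neq\emptyset$ (componentwise inequalities), $\delta_C$ the indicator function of $C$; $\partial$ is the limiting subdifferential. Assumption A: (i) $\nabla f$ is Lipschitz with modulus $L_f$; (ii) each $g_i$ is differentiable with $\nabla g_i$ Lipschitz with modulus $L_{g_i}$; (iii) $F$ is level-bounded. Assumption B (MFCQ): each $g_i$ is continuously differentiable and for every $x$ with $g(x)\le0$ there is $d$ with $\langle\nabla g_i(x),d\rangle<0$ for all $i\in I(x):=\{j:g_j(x)=0\}$. Assumption C: each $g_i$ is twice continuously differentiable. Assumption D: $P_2$ is continuously differentiable on an open set $\Gamma$ containing all stationary points of (P), and $\nabla P_2$ is locally Lipschitz on $\Gamma$. Stationary point: $x$ with $g(x)\le0$ for which there is $\lambda\in\mathbb R^m_+$ with $\lambda_ig_i(x)=0$ for all $i$ and $0\in\nabla f(x)+\partial P_1(x)-\partial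 P_2(x)+\sum_i\lambda_i\nabla g_i(x)$. $\bar G(x,y,w)\in\mathbb R^m$ has components $\bar G_i(x,y,w)=g_i(y)+\langle\nabla g_i(y),x-y\rangle+\frac{w_i}{2}\|x-y\|^2$, and $\bar F(x,y,w):=f(x)+P_1(x)-P_2(x)+\delta_{\{\bar G\le0\}}(x,y,w)$. Algorithm SCP$_{ls}$: fix $c>0$, $0<\underline L<\bar L$, $\tau>1$ and $x^0$ with $g(x^0)\le0$. For $t=0,1,2,\dots$: (1) pick any $\xi^t\in\partial P_2(x^t)$; (2) choose $L_f^{t,0}\in[\underline L,\bar L]$, $L_g^{t,0}\in[\underline L,\bar L]^m$ arbitrarily, set $\tilde L_f=L_f^{t,0}$, $\tilde L_g=L_g^{t,0}$; (3) compute $\tilde x$ solving: minimize $\langle\nabla f(x^t)-\xi^t,x-x^t\rangle+\frac{\tilde L_f}{2}\|x-x^t\|^2+P_1(x)$ subject to $\bar G(x,x^t,\tilde L_g)\le0$. If $g(\tilde x)\le0$ and $F(\tilde x)\le F(x^t)-\frac c2\|\tilde x-x^t\|^2$, set $x^{t+1}=\tilde x$, $L_f^t=\tilde L_f$, $L_g^t=\tilde L_g$ and go to iteration $t+1$; otherwise, if $g(\tilde x)\not\le0$ replace $\tilde L_g$ by $\tau\tilde L_g$, while if $g(\tilde x)\le0$ but the decrease inequality fails replace $\tilde L_f$ by $\tau\tilde L_f$, and repeat step (3). *)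

theory Defs
  imports "HOL-Analysis.Analysis"
begin

text \<open>Frechet (regular) subdifferential: v is a regular subgradient of h at x iff h x is finite
  and liminf_{z -> x, z ~= x} (h z - h x - <v, z - x>) / norm (z - x) >= 0.\<close>
definition frechet_subdiff :: "('a::euclidean_space \<Rightarrow> ereal) \<Rightarrow> 'a \<Rightarrow> 'a set" where
  "frechet_subdiff h x =
     {v. \<bar>h x\<bar> \<noteq> \<infinity> \<and>
         (\<forall>e>0. \<exists>d>0. \<forall>z. norm (z - x) < d \<longrightarrow>
              h z \<ge> h x + ereal (v \<bullet> (z - x) - e * norm (z - x)))}"

definition lim_subdiff :: "('a::euclidean_space \<Rightarrow> ereal) \<Rightarrow> 'a \<Rightarrow> 'a set" where
  "lim_subdiff h x =
     {v. \<bar>h x\<bar> \<noteq> \<infinity> \<and>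
         (\<exists>xs vs. xs \<longlonglongrightarrow> x \<and> (\<lambda>k. h (xs k)) \<longlonglongrightarrow> h x \<and>
                  (\<forall>k. vs k \<in> frechet_subdiff h (xs k)) \<and> vs \<longlonglongrightarrow> v)}"

definition lsubdiff :: "('a::euclidean_space \<Rightarrow> real) \<Rightarrow> 'a \<Rightarrow> 'a set" where
  "lsubdiff h x = lim_subdiff (\<lambda>z. ereal (h z)) x"

definition feas :: "('m::finite \<Rightarrow> 'a \<Rightarrow> real) \<Rightarrow> 'a \<Rightarrow> bool" where
  "feas g x \<longleftrightarrow> (\<forall>i. g i x \<le> 0)"

definition Fobj :: "('a \<Rightarrow> real) \<Rightarrow> ('a \<Rightarrow> real) \<Rightarrow> ('a \<Rightarrow> real) \<Rightarrow> ('m::finite \<Rightarrow> 'a \<Rightarrow> real)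
                    \<Rightarrow> 'a \<Rightarrow> ereal" where
  "Fobj f P1 P2 g x = (if feas g x then ereal (f x + P1 x - P2 x) else \<infinity>)"

definition Gbar :: "('m::finite \<Rightarrow> 'a::real_inner \<Rightarrow> real) \<Rightarrow> ('m \<Rightarrow> 'a \<Rightarrow> 'a)
                    \<Rightarrow> 'a \<Rightarrow> 'a \<Rightarrow> real^'m \<Rightarrow> 'm \<Rightarrow> real" where
  "Gbar g gradg x y w i = g i y + gradg i y \<bullet> (x - y) + w $ i / 2 * (norm (x - y))\<^sup>2"

definition Fbar :: "('a::euclidean_space \<Rightarrow> real) \<Rightarrow> ('a \<Rightarrow> real) \<Rightarrow> ('a \<Rightarrow> real)
                    \<Rightarrow> ('m::finite \<Rightarrow> 'a \<Rightarrow> real) \<Rightarrow> ('m \<Rightarrow> 'a \<Rightarrow> 'a)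
                    \<Rightarrow> 'a \<times> 'a \<times> (real^'m) \<Rightarrow> ereal" where
  "Fbar f P1 P2 g gradg p =
     (case p of (x, y, w) \<Rightarrow>
        if (\<forall>i. Gbar g gradg x y w i \<le> 0) then ereal (f x + P1 x - P2 x) else \<infinity>)"

definition stationary :: "('a::euclidean_space \<Rightarrow> real) \<Rightarrow> ('a \<Rightarrow> 'a) \<Rightarrow> ('a \<Rightarrow> real) \<Rightarrow> ('a \<Rightarrow> real)
                    \<Rightarrow> ('m::finite \<Rightarrow> 'a \<Rightarrow> real) \<Rightarrow> ('m \<Rightarrow> 'a \<Rightarrow> 'a) \<Rightarrow> 'a \<Rightarrow> bool" where
  "stationary f gradf P1 P2 g gradg x \<longleftrightarrow>
     feas g x \<and>
     (\<exists>lam :: 'm \<Rightarrow> real. (\<forall>i. lam i \<ge> 0 \<and> lam i * g i x = 0) \<and>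
        (\<exists>u \<in> lsubdiff P1 x. \<exists>v \<in> lsubdiff P2 x.
            gradf x + u - v + (\<Sum>i\<in>UNIV. lam i *\<^sub>R gradg i x) = 0))"

definition problem_P :: "('a::euclidean_space \<Rightarrow> real) \<Rightarrow> ('a \<Rightarrow> 'a) \<Rightarrow> ('a \<Rightarrow> real) \<Rightarrow> ('a \<Rightarrow> real)
                    \<Rightarrow> ('m::finite \<Rightarrow> 'a \<Rightarrow> real) \<Rightarrow> bool" where
  "problem_P f gradf P1 P2 g \<longleftrightarrow>
     (\<forall>x. (f has_derivative (\<lambda>h. gradf x \<bullet> h)) (at x)) \<and> continuous_on UNIV gradf \<and>
     convex_on UNIV P1 \<and> continuous_on UNIV P1 \<and>
     convex_on UNIV P2 \<and> continuous_on UNIV P2 \<and>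
     (\<forall>i. continuous_on UNIV (g i)) \<and> (\<exists>x. feas g x)"

definition assumption_A :: "('a::euclidean_space \<Rightarrow> real) \<Rightarrow> ('a \<Rightarrow> 'a) \<Rightarrow> ('a \<Rightarrow> real) \<Rightarrow> ('a \<Rightarrow> real)
                    \<Rightarrow> ('m::finite \<Rightarrow> 'a \<Rightarrow> real) \<Rightarrow> ('m \<Rightarrow> 'a \<Rightarrow> 'a) \<Rightarrow> bool" where
  "assumption_A f gradf P1 P2 g gradg \<longleftrightarrow>
     (\<exists>Lf. \<forall>x y. norm (gradf x - gradf y) \<le> Lf * norm (x - y)) \<and>
     (\<forall>i. (\<forall>x. (g i has_derivative (\<lambda>h. gradg i x \<bullet> h)) (at x)) \<and>
          (\<exists>Lgi. \<forall>x y. norm (gradg i x - gradg i y) \<le> Lgi * norm (x - y))) \<and>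
     (\<forall>\<alpha>::real. bounded {x. Fobj f P1 P2 g x \<le> ereal \<alpha>})"

definition assumption_B :: "('m::finite \<Rightarrow> 'a::euclidean_space \<Rightarrow> real) \<Rightarrow> ('m \<Rightarrow> 'a \<Rightarrow> 'a) \<Rightarrow> bool" where
  "assumption_B g gradg \<longleftrightarrow>
     (\<forall>i. (\<forall>x. (g i has_derivative (\<lambda>h. gradg i x \<bullet> h)) (at x)) \<and> continuous_on UNIV (gradg i)) \<and>
     (\<forall>x. feas g x \<longrightarrow> (\<exists>d. \<forall>i. g i x = 0 \<longrightarrow> gradg i x \<bullet> d < 0))"

definition assumption_C :: "('m::finite \<Rightarrow> 'a::euclidean_space \<Rightarrow> real) \<Rightarrow> ('m \<Rightarrow> 'a \<Rightarrow> 'a) \<Rightarrow> bool" where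
  "assumption_C g gradg \<longleftrightarrow>
     (\<forall>i. (\<forall>x. (g i has_derivative (\<lambda>h. gradg i x \<bullet> h)) (at x)) \<and>
          (\<exists>H :: 'a \<Rightarrow> 'a \<Rightarrow>\<^sub>L 'a. (\<forall>x. (gradg i has_derivative blinfun_apply (H x)) (at x)) \<and>
                continuous_on UNIV H))"

definition assumption_D :: "('a::euclidean_space \<Rightarrow> real) \<Rightarrow> ('a \<Rightarrow> 'a) \<Rightarrow> ('a \<Rightarrow> real) \<Rightarrow> ('a \<Rightarrow> real)
                    \<Rightarrow> ('m::finite \<Rightarrow> 'a \<Rightarrow> real) \<Rightarrow> ('m \<Rightarrow> 'a \<Rightarrow> 'a) \<Rightarrow> bool" where
  "assumption_D f gradf P1 P2 g gradg \<longleftrightarrow>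
     (\<exists>\<Gamma> gradP2. open \<Gamma> \<and> {x. stationary f gradf P1 P2 g gradg x} \<subseteq> \<Gamma> \<and>
        (\<forall>x\<in>\<Gamma>. (P2 has_derivative (\<lambda>h. gradP2 x \<bullet> h)) (at x)) \<and>
        continuous_on \<Gamma> gradP2 \<and>
        (\<forall>x\<in>\<Gamma>. \<exists>e>0. \<exists>K. \<forall>y\<in>ball x e \<inter> \<Gamma>. \<forall>z\<in>ball x e \<inter> \<Gamma>.
             norm (gradP2 y - gradP2 z) \<le> K * norm (y - z)))"

definition sub_obj :: "('a::euclidean_space \<Rightarrow> 'a) \<Rightarrow> ('a \<Rightarrow> real) \<Rightarrow> 'a \<Rightarrow> 'a \<Rightarrow> real \<Rightarrow> 'a \<Rightarrow> real" where
  "sub_obj gradf P1 xt xi Lf z = (gradf xt - xi) \<bullet> (z - xt) + Lf / 2 * (norm (z - xt))\<^sup>2 + P1 z"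

definition solves_sub :: "('a::euclidean_space \<Rightarrow> 'a) \<Rightarrow> ('a \<Rightarrow> real) \<Rightarrow> ('m::finite \<Rightarrow> 'a \<Rightarrow> real)
                    \<Rightarrow> ('m \<Rightarrow> 'a \<Rightarrow> 'a) \<Rightarrow> 'a \<Rightarrow> 'a \<Rightarrow> real \<Rightarrow> real^'m \<Rightarrow> 'a \<Rightarrow> bool" where
  "solves_sub gradf P1 g gradg xt xi Lf Lg z \<longleftrightarrow>
     (\<forall>i. Gbar g gradg z xt Lg i \<le> 0) \<and>
     (\<forall>y. (\<forall>i. Gbar g gradg y xt Lg i \<le> 0) \<longrightarrow>
          sub_obj gradf P1 xt xi Lf z \<le> sub_obj gradf P1 xt xi Lf y)"

definition accept :: "('a::euclidean_space \<Rightarrow> real) \<Rightarrow> ('a \<Rightarrow> real) \<Rightarrow> ('a \<Rightarrow> real)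
                    \<Rightarrow> ('m::finite \<Rightarrow> 'a \<Rightarrow> real) \<Rightarrow> real \<Rightarrow> 'a \<Rightarrow> 'a \<Rightarrow> bool" where
  "accept f P1 P2 g c xt z \<longleftrightarrow>
     feas g z \<and> f z + P1 z - P2 z \<le> f xt + P1 xt - P2 xt - c / 2 * (norm (z - xt))\<^sup>2"

text \<open>(x, Lf, Lg) is generated by SCP_ls with parameters c, Lmin, Lmax, tau, using subgradients xi;
  for iteration t the line search produces trial parameters TLf t j, TLg t j and trial points
  Tx t j, j = 0..J t, the last one being accepted.\<close>
definition SCP_ls :: "('a::euclidean_space \<Rightarrow> real) \<Rightarrow> ('a \<Rightarrow> 'a) \<Rightarrow> ('a \<Rightarrow> real) \<Rightarrow> ('a \<Rightarrow> real)
                    \<Rightarrow> ('m::finite \<Rightarrow> 'a \<Rightarrow> real) \<Rightarrow> ('m \<Rightarrow> 'a \<Rightarrow> 'a)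
                    \<Rightarrow> real \<Rightarrow> real \<Rightarrow> real \<Rightarrow> real
                    \<Rightarrow> (nat \<Rightarrow> 'a) \<Rightarrow> (nat \<Rightarrow> real) \<Rightarrow> (nat \<Rightarrow> real^'m) \<Rightarrow> bool" where
  "SCP_ls f gradf P1 P2 g gradg c Lmin Lmax tau x Lf Lg \<longleftrightarrow>
     feas g (x 0) \<and>
     (\<exists>(xi :: nat \<Rightarrow> 'a) (J :: nat \<Rightarrow> nat) (TLf :: nat \<Rightarrow> nat \<Rightarrow> real)
        (TLg :: nat \<Rightarrow> nat \<Rightarrow> real^'m) (Tx :: nat \<Rightarrow> nat \<Rightarrow> 'a).
       \<forall>t. xi t \<in> lsubdiff P2 (x t) \<and>
           Lmin \<le> TLf t 0 \<and> TLf t 0 \<le> Lmax \<and>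
           (\<forall>i. Lmin \<le> TLg t 0 $ i \<and> TLg t 0 $ i \<le> Lmax) \<and>
           (\<forall>j\<le>J t. solves_sub gradf P1 g gradg (x t) (xi t) (TLf t j) (TLg t j) (Tx t j)) \<and>
           (\<forall>j<J t. \<not> accept f P1 P2 g c (x t) (Tx t j) \<and>
               (if \<not> feas g (Tx t j)
                then TLg t (Suc j) = tau *\<^sub>R TLg t j \<and> TLf t (Suc j) = TLf t j
                else TLf t (Suc j) = tau * TLf t j \<and> TLg t (Suc j) = TLg t j)) \<and>
           accept f P1 P2 g c (x t) (Tx t (J t)) \<and>
           x (Suc t) = Tx t (J t) \<and> Lf t = TLf t (J t) \<and> Lg t = TLg t (J t))"

end

theory Submission
  imports Defs
begin

text \<open>Each subproblem is convex and, by MFCQ at the feasible iterate, has a Slater point, hence KKT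
  multipliers. The line search enlarges the parameters only boundedly often, so they stay bounded;
  sufficient decrease and level-boundedness make the iterates bounded with x (Suc t) - x t \<rightarrow> 0.
  If the multipliers were unbounded, their normalized limit along a subsequence would be an
  abnormal multiplier at a feasible limit point, contradicting MFCQ; so they are eventually
  bounded and every cluster point of the iterates is stationary. The iterates therefore end up in
  \<Gamma>, and by compactness grad P2 is Lipschitz along consecutive iterates. Finally, the KKT
  conditions of step t exhibit a smooth minorant R of Fbar touching it at
  p = (x (Suc t), x t, Lg t) whose gradient has norm at most \<kappa> * norm (x (Suc t) - x t); this
  gradient is a Frechet subgradient of Fbar at p.\<close>

section \<open>Elementary real analysis\<close>

lemma nonpos_if_le_eps_mult:
  fixes A B :: real
  assumes "\<And>e. e > 0 \<Longrightarrow> A \<le> e * B"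
  shows "A \<le> 0"
proof (rule ccontr)
  assume "\<not> A \<le> 0"
  hence A: "A > 0" by simp
  show False
  proof (cases "B \<le> 0")
    case True with assms[of 1] A show False by simp
  next
    case False
    with assms[of "A / (2 * B)"] A show False by (simp add: field_simps)
  qed
qed

lemma nonneg_if_lower_bound_along_ray:
  fixes A B b :: real
  assumes "\<And>n. n > 0 \<Longrightarrow> b \<le> A + n * B"
  shows "0 \<le> B"
proof (rule ccontr)
  assume "\<not> 0 \<le> B"
  hence B: "B < 0" by simp
  define n where "n = (\<bar>A - b\<bar> + 1) / (- B)"
  have "n > 0" using B unfolding n_def by (intro divide_pos_pos) auto
  hence "b \<le> A + n * B" by (rule assms)
  also have "n * B = - (\<bar>A - b\<bar> + 1)" using B by (simp add: n_def field_simps)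
  finally show False by linarith
qed

lemma quadratic_negative_near_zero:
  fixes A B C :: real
  assumes A: "A \<le> 0" and C: "C \<ge> 0" and AB: "A = 0 \<Longrightarrow> B < 0"
  shows "\<exists>b>0. \<forall>s. 0 < s \<and> s < b \<longrightarrow> A + s * B + s\<^sup>2 * C < 0"
proof (cases "A < 0")
  case True
  define b where "b = min 1 (- A / (2 * (\<bar>B\<bar> + C + 1)))"
  have "- A / (2 * (\<bar>B\<bar> + C + 1)) > 0" using True C by (intro divide_pos_pos) auto
  hence b: "b > 0" unfolding b_def by simp
  have "A + s * B + s\<^sup>2 * C < 0" if s: "0 < s" "s < b" for s
  proof -
    have s1: "s < 1" using s by (simp add: b_def)
    have "s * B \<le> s * \<bar>B\<bar>" using s by (simp add: mult_left_mono)
    moreover have "s\<^sup>2 * C \<le> s * C"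
      using s s1 C by (simp add: power2_eq_square mult_right_mono mult_left_le_one_le)
    moreover have "s * (\<bar>B\<bar> + C + 1) < b * (\<bar>B\<bar> + C + 1)"
      using s C by (intro mult_strict_right_mono) auto
    moreover have "b * (\<bar>B\<bar> + C + 1) \<le> - A / 2"
    proof -
      have "b * (\<bar>B\<bar> + C + 1) \<le> - A / (2 * (\<bar>B\<bar> + C + 1)) * (\<bar>B\<bar> + C + 1)"
        using C by (intro mult_right_mono) (auto simp: b_def)
      also have "\<dots> = - A / 2" using C by (simp add: field_simps)
      finally show ?thesis .
    qed
    moreover have "s * (\<bar>B\<bar> + C + 1) = s * \<bar>B\<bar> + s * C + s" by (simp add: algebra_simps)
    ultimately show ?thesis using True s by linarith
  qed
  with b show ?thesis by blast
next
  case False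
  hence "A = 0" using A by simp
  hence B: "B < 0" by (rule AB)
  define b where "b = - B / (C + 1)"
  have b: "b > 0" using B C unfolding b_def by (intro divide_pos_pos) auto
  have "A + s * B + s\<^sup>2 * C < 0" if s: "0 < s" "s < b" for s
  proof -
    have "s * C \<le> b * C" using s C by (intro mult_right_mono) auto
    also have "b * C < - B" using B C by (simp add: b_def field_simps)
    finally have "s * (B + s * C) < 0" using s by (simp add: mult_pos_neg)
    thus ?thesis using \<open>A = 0\<close> by (simp add: power2_eq_square algebra_simps)
  qed
  with b show ?thesis by blast
qed

lemma continuous_on_UNIV_tendsto:
  "continuous_on UNIV f \<Longrightarrow> (X \<longlongrightarrow> l) F \<Longrightarrow> ((\<lambda>n. f (X n)) \<longlongrightarrow> f l) F"
  by (rule continuous_on_tendsto_compose) auto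

lemma continuous_on_UNIV_bounded_on_cball:
  fixes h :: "'a::euclidean_space \<Rightarrow> 'b::real_normed_vector"
  assumes "continuous_on UNIV h"
  shows "\<exists>M. \<forall>z. norm z \<le> R \<longrightarrow> norm (h z) \<le> M"
proof -
  have "compact (h ` cball 0 R)"
    by (rule compact_continuous_image[OF continuous_on_subset[OF assms] compact_cball]) simp
  then obtain M where "\<forall>y\<in>h ` cball 0 R. norm y \<le> M"
    using compact_imp_bounded bounded_iff by metis
  thus ?thesis by (intro exI[of _ M]) (auto simp: mem_cball_0)
qed

lemma LIMSEQ_compose_ge_index:
  assumes "\<And>n. \<sigma> n \<ge> n" and "X \<longlonglongrightarrow> l"
  shows "(\<lambda>n. X (\<sigma> n)) \<longlonglongrightarrow> l"
proof -
  have "filterlim \<sigma> sequentially sequentially"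
    by (rule filterlim_at_top_mono[OF filterlim_ident]) (use assms in auto)
  thus ?thesis using assms(2) by (rule filterlim_compose[rotated])
qed

lemma linear_functional_inner_representation:
  fixes D :: "'b::euclidean_space \<Rightarrow> real"
  assumes lin: "linear D" and bd: "\<And>h. \<bar>D h\<bar> \<le> C * norm h"
  shows "\<exists>v. (\<forall>h. D h = v \<bullet> h) \<and> norm v \<le> C"
proof -
  define v where "v = (\<Sum>b\<in>Basis. D b *\<^sub>R b)"
  have Dv: "D h = v \<bullet> h" for h
  proof -
    have "D h = D (\<Sum>b\<in>Basis. (h \<bullet> b) *\<^sub>R b)" by (simp add: euclidean_representation)
    also have "\<dots> = (\<Sum>b\<in>Basis. D b * (b \<bullet> h))"
      by (simp add: linear_sum[OF lin] linear_scale[OF lin] inner_commute mult.commute)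
    also have "\<dots> = v \<bullet> h" by (simp add: v_def inner_sum_left)
    finally show ?thesis .
  qed
  have "norm v \<le> C"
  proof (cases "v = 0")
    case True
    obtain b0 :: 'b where "b0 \<in> Basis" using nonempty_Basis by blast
    hence "C \<ge> 0" using bd[of b0] by (simp add: order_trans[OF abs_ge_zero])
    thus ?thesis using True by simp
  next
    case False
    have "norm v * norm v = D v" by (simp add: Dv power2_norm_eq_inner[symmetric] power2_eq_square)
    also have "\<dots> \<le> C * norm v" using bd[of v] by simp
    finally show ?thesis using False by simp
  qed
  with Dv show ?thesis by blast
qed

lemma descent_lemma:
  fixes F :: "'a::euclidean_space \<Rightarrow> real"
  assumes D: "\<And>x. (F has_derivative (\<lambda>h. Gr x \<bullet> h)) (at x)"
    and L: "\<And>x y. norm (Gr x - Gr y) \<le> L * norm (x - y)" and L0: "L \<ge> 0"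
  shows "F z \<le> F x + Gr x \<bullet> (z - x) + L * (norm (z - x))\<^sup>2"
proof -
  define u where "u = z - x"
  define \<phi> where "\<phi> = (\<lambda>s. F (x + s *\<^sub>R u))"
  have d\<phi>: "(\<phi> has_real_derivative (Gr (x + s *\<^sub>R u) \<bullet> u)) (at s)" for s
  proof -
    have "((\<lambda>s. x + s *\<^sub>R u) has_derivative (\<lambda>h. h *\<^sub>R u)) (at s)"
      by (auto intro!: derivative_eq_intros)
    from has_derivative_compose[OF this D]
    have "(\<phi> has_derivative (\<lambda>h. (Gr (x + s *\<^sub>R u) \<bullet> u) * h)) (at s)"
      by (simp add: \<phi>_def mult.commute)
    thus ?thesis by (simp add: has_field_derivative_def)
  qed
  obtain s where s: "0 < s" "s < 1" and eq: "\<phi> 1 - \<phi> 0 = (1 - 0) * (Gr (x + s *\<^sub>R u) \<bullet> u)"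
    using MVT2[of 0 1 \<phi> "\<lambda>s. Gr (x + s *\<^sub>R u) \<bullet> u"] d\<phi> by auto
  have "Gr (x + s *\<^sub>R u) \<bullet> u - Gr x \<bullet> u \<le> norm (Gr (x + s *\<^sub>R u) - Gr x) * norm u"
    by (metis inner_diff_left norm_cauchy_schwarz)
  also have "\<dots> \<le> L * norm (s *\<^sub>R u) * norm u"
    using L[of "x + s *\<^sub>R u" x] by (simp add: mult_right_mono)
  also have "\<dots> \<le> L * norm u * norm u"
    using s L0 by (intro mult_right_mono mult_left_mono) (auto simp: mult_left_le_one_le)
  finally show ?thesis using eq by (simp add: \<phi>_def u_def power2_eq_square)
qed

section \<open>Frechet and limiting subgradients\<close>

lemma frechet_subdiff_imp_lim_subdiff:
  assumes v: "v \<in> frechet_subdiff h x"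
  shows "v \<in> lim_subdiff h x"
proof -
  have "\<bar>h x\<bar> \<noteq> \<infinity>" using v by (simp add: frechet_subdiff_def)
  moreover have "\<exists>xs vs. xs \<longlonglongrightarrow> x \<and> (\<lambda>k::nat. h (xs k)) \<longlonglongrightarrow> h x \<and>
      (\<forall>k. vs k \<in> frechet_subdiff h (xs k)) \<and> vs \<longlonglongrightarrow> v"
    using v by (intro exI[of _ "\<lambda>k::nat. x"] exI[of _ "\<lambda>k::nat. v"]) simp
  ultimately show ?thesis unfolding lim_subdiff_def by blast
qed

lemma frechet_subdiff_of_quadratic_minorant:
  fixes H :: "'a::euclidean_space \<Rightarrow> ereal"
  assumes fin: "\<bar>H p\<bar> \<noteq> \<infinity>" and r: "r > 0" and K: "K \<ge> 0"
    and le: "\<And>z. norm (z - p) < r \<Longrightarrow> H p + ereal (v \<bullet> (z - p) - K * (norm (z - p))\<^sup>2) \<le> H z"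
  shows "v \<in> frechet_subdiff H p"
proof -
  obtain a where a: "H p = ereal a" using fin by (cases "H p") auto
  have "\<exists>d>0. \<forall>z. norm (z - p) < d \<longrightarrow> H p + ereal (v \<bullet> (z - p) - e * norm (z - p)) \<le> H z"
    if e: "e > 0" for e
  proof (intro exI[of _ "min r (e / (K + 1))"] conjI allI impI)
    show "min r (e / (K + 1)) > 0" using r e K by simp
    fix z assume z: "norm (z - p) < min r (e / (K + 1))"
    have "K * norm (z - p) \<le> K * (e / (K + 1))" using z K by (intro mult_left_mono) auto
    also have "\<dots> \<le> e" using K e by (simp add: field_simps)
    finally have "K * (norm (z - p))\<^sup>2 \<le> e * norm (z - p)"
      by (simp add: power2_eq_square mult.assoc[symmetric] mult_right_mono)
    hence "H p + ereal (v \<bullet> (z - p) - e * norm (z - p))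
        \<le> H p + ereal (v \<bullet> (z - p) - K * (norm (z - p))\<^sup>2)"
      by (simp add: a)
    also have "\<dots> \<le> H z" using le z by simp
    finally show "H p + ereal (v \<bullet> (z - p) - e * norm (z - p)) \<le> H z" .
  qed
  with fin show ?thesis unfolding frechet_subdiff_def by auto
qed

lemma frechet_subdiff_of_smooth_minorant:
  fixes H :: "'a::euclidean_space \<Rightarrow> ereal"
  assumes fin: "\<bar>H p\<bar> \<noteq> \<infinity>" and D: "(R has_derivative (\<lambda>h. v \<bullet> h)) (at p)"
    and le: "\<And>z. H p + ereal (R z - R p) \<le> H z"
  shows "v \<in> frechet_subdiff H p"
proof -
  obtain a where a: "H p = ereal a" using fin by (cases "H p") auto
  have "\<exists>d>0. \<forall>z. norm (z - p) < d \<longrightarrow> H p + ereal (v \<bullet> (z - p) - e * norm (z - p)) \<le> H z"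
    if e: "e > 0" for e
  proof -
    obtain d where d: "d > 0"
      and dd: "\<And>y. norm (y - p) < d \<Longrightarrow> norm (R y - R p - v \<bullet> (y - p)) \<le> e * norm (y - p)"
      using D e unfolding has_derivative_at_alt by blast
    have "H p + ereal (v \<bullet> (z - p) - e * norm (z - p)) \<le> H z" if z: "norm (z - p) < d" for z
    proof -
      have "H p + ereal (v \<bullet> (z - p) - e * norm (z - p)) \<le> H p + ereal (R z - R p)"
        using dd[OF z] by (simp add: a abs_le_iff)
      also have "\<dots> \<le> H z" by (rule le)
      finally show ?thesis .
    qed
    with d show ?thesis by blast
  qed
  with fin show ?thesis unfolding frechet_subdiff_def by auto
qed

lemma subgradient_imp_frechet_subdiff:
  fixes P :: "'a::euclidean_space \<Rightarrow> real"
  assumes "\<And>z. P x + v \<bullet> (z - x) \<le> P z"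
  shows "v \<in> frechet_subdiff (\<lambda>z. ereal (P z)) x"
  by (rule frechet_subdiff_of_quadratic_minorant[where r=1 and K=0]) (use assms in auto)

lemma convex_frechet_subdiff_imp_subgradient:
  fixes P :: "'a::euclidean_space \<Rightarrow> real"
  assumes cv: "convex_on UNIV P" and v: "v \<in> frechet_subdiff (\<lambda>z. ereal (P z)) x"
  shows "P x + v \<bullet> (z - x) \<le> P z"
proof (rule ccontr)
  assume not_sg: "\<not> ?thesis"
  define \<delta> where "\<delta> = P x + v \<bullet> (z - x) - P z"
  have \<delta>: "\<delta> > 0" using not_sg by (simp add: \<delta>_def)
  hence zx: "norm (z - x) > 0" by (auto simp: \<delta>_def)
  define e where "e = \<delta> / (2 * norm (z - x))"
  have e: "e > 0" using \<delta> zx by (simp add: e_def)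
  obtain d where d: "d > 0" and dd: "\<And>y. norm (y - x) < d \<Longrightarrow>
      ereal (P x) + ereal (v \<bullet> (y - x) - e * norm (y - x)) \<le> ereal (P y)"
    using v e unfolding frechet_subdiff_def by blast
  define s where "s = min (1/2) (d / (2 * norm (z - x)))"
  have s: "0 < s" "s \<le> 1" using d zx by (auto simp: s_def)
  define y where "y = (1 - s) *\<^sub>R x + s *\<^sub>R z"
  have yx: "y - x = s *\<^sub>R (z - x)" by (simp add: y_def algebra_simps)
  have "norm (y - x) = s * norm (z - x)" using s by (simp add: yx)
  also have "\<dots> \<le> d / (2 * norm (z - x)) * norm (z - x)"
    using zx by (intro mult_right_mono) (auto simp: s_def)
  also have "\<dots> < d" using zx d by simp
  finally have "P x + s * (v \<bullet> (z - x)) - e * (s * norm (z - x)) \<le> P y"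
    using dd[of y] s by (simp add: yx)
  moreover have "P y \<le> (1 - s) * P x + s * P z"
    using convex_onD[OF cv, of s x z] s by (simp add: y_def)
  ultimately have "s * (P x + v \<bullet> (z - x) - e * norm (z - x)) \<le> s * P z"
    by (simp add: algebra_simps)
  hence "\<delta> \<le> e * norm (z - x)" using s unfolding \<delta>_def by simp
  moreover have "e * norm (z - x) = \<delta> / 2" using zx by (simp add: e_def)
  ultimately show False using \<delta> by linarith
qed

lemma convex_lsubdiff_imp_subgradient:
  fixes P :: "'a::euclidean_space \<Rightarrow> real"
  assumes cv: "convex_on UNIV P" and ct: "continuous_on UNIV P" and v: "v \<in> lsubdiff P x"
  shows "P x + v \<bullet> (z - x) \<le> P z"
proof -
  obtain xs vs where xs: "xs \<longlonglongrightarrow> x" and vs: "vs \<longlonglongrightarrow> v"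
    and fr: "\<And>k. vs k \<in> frechet_subdiff (\<lambda>z. ereal (P z)) (xs k)"
    using v unfolding lsubdiff_def lim_subdiff_def by blast
  have "(\<lambda>k. P (xs k) + vs k \<bullet> (z - xs k)) \<longlonglongrightarrow> P x + v \<bullet> (z - x)"
    by (intro tendsto_intros xs vs continuous_on_UNIV_tendsto[OF ct xs])
  thus ?thesis using convex_frechet_subdiff_imp_subgradient[OF cv fr]
    by (intro LIMSEQ_le_const2) auto
qed

lemma subgradient_eq_gradient:
  fixes P :: "'a::euclidean_space \<Rightarrow> real"
  assumes sg: "\<And>z. P x + v \<bullet> (z - x) \<le> P z" and D: "(P has_derivative (\<lambda>h. G \<bullet> h)) (at x)"
  shows "v = G"
proof (rule ccontr)
  assume "v \<noteq> G"
  define u where "u = v - G"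
  have u: "norm u > 0" using \<open>v \<noteq> G\<close> by (simp add: u_def)
  have "(norm u)\<^sup>2 \<le> e * norm u" if e: "e > 0" for e
  proof -
    obtain d where d: "d > 0" and dd: "\<And>y. norm (y - x) < d \<Longrightarrow>
        norm (P y - P x - G \<bullet> (y - x)) \<le> e * norm (y - x)"
      using D e unfolding has_derivative_at_alt by blast
    define s where "s = d / (2 * norm u)"
    have s: "s > 0" using d u by (simp add: s_def)
    have "norm ((x + s *\<^sub>R u) - x) < d" using s u d by (simp add: s_def)
    from dd[OF this] have "P (x + s *\<^sub>R u) - P x - s * (G \<bullet> u) \<le> e * (s * norm u)"
      using s by (simp add: abs_le_iff)
    moreover have "P x + s * (v \<bullet> u) \<le> P (x + s *\<^sub>R u)" using sg[of "x + s *\<^sub>R u"] by simp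
    ultimately have "s * (u \<bullet> u) \<le> s * (e * norm u)"
      by (simp add: u_def inner_diff_left algebra_simps)
    thus ?thesis using s by (simp add: power2_norm_eq_inner)
  qed
  hence "(norm u)\<^sup>2 \<le> 0" by (intro nonpos_if_le_eps_mult) auto
  thus False using u by simp
qed

section \<open>Fritz John and KKT conditions of convex programs\<close>

lemma convex_on_norm_diff_squared: "convex_on UNIV (\<lambda>z::'a::real_inner. (norm (z - a))\<^sup>2)"
proof (rule convex_onI)
  fix t :: real and x y :: 'a
  assume t: "0 < t" "t < 1"
  define p where "p = x - a"
  define q where "q = y - a"
  have e: "(1 - t) *\<^sub>R x + t *\<^sub>R y - a = (1 - t) *\<^sub>R p + t *\<^sub>R q"
    by (simp add: p_def q_def algebra_simps)
  have "(1 - t) * (norm p)\<^sup>2 + t * (norm q)\<^sup>2 - (norm ((1 - t) *\<^sub>R p + t *\<^sub>R q))\<^sup>2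
      = t * (1 - t) * (norm (p - q))\<^sup>2"
    unfolding power2_norm_eq_inner by (simp add: inner_simps inner_commute algebra_simps)
  moreover have "t * (1 - t) * (norm (p - q))\<^sup>2 \<ge> 0" using t by simp
  ultimately show "(norm ((1 - t) *\<^sub>R x + t *\<^sub>R y - a))\<^sup>2
      \<le> (1 - t) * (norm (x - a))\<^sup>2 + t * (norm (y - a))\<^sup>2"
    unfolding e p_def[symmetric] q_def[symmetric] by linarith
qed simp

lemma convex_on_inner_affine: "convex_on UNIV (\<lambda>z::'a::real_inner. v \<bullet> (z - a) + k)"
  by (rule convex_onI) (auto simp: inner_diff_right inner_add_right algebra_simps)

lemma convex_dominated_values:
  fixes \<psi> :: "'a::real_vector \<Rightarrow> real" and G :: "'m::finite \<Rightarrow> 'a \<Rightarrow> real"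
  assumes c\<psi>: "convex_on UNIV \<psi>" and cG: "\<And>i. convex_on UNIV (G i)"
  shows "convex {p :: real \<times> (real^'m). \<exists>z. \<psi> z - r \<le> fst p \<and> (\<forall>i. G i z \<le> snd p $ i)}"
  unfolding convex_def
proof (intro ballI allI impI)
  fix p q :: "real \<times> (real^'m)" and u v :: real
  assume "p \<in> {p. \<exists>z. \<psi> z - r \<le> fst p \<and> (\<forall>i. G i z \<le> snd p $ i)}"
    and "q \<in> {p. \<exists>z. \<psi> z - r \<le> fst p \<and> (\<forall>i. G i z \<le> snd p $ i)}"
    and uv: "0 \<le> u" "0 \<le> v" "u + v = 1"
  then obtain z1 z2 where z1: "\<psi> z1 - r \<le> fst p" "\<And>i. G i z1 \<le> snd p $ i"
    and z2: "\<psi> z2 - r \<le> fst q" "\<And>i. G i z2 \<le> snd q $ i"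
    by auto
  have u: "u = 1 - v" using uv by simp
  define z where "z = (1 - v) *\<^sub>R z1 + v *\<^sub>R z2"
  have "\<psi> z \<le> (1 - v) * \<psi> z1 + v * \<psi> z2"
    unfolding z_def using uv by (intro convex_onD[OF c\<psi>]) auto
  also have "\<dots> \<le> (1 - v) * (fst p + r) + v * (fst q + r)"
    using uv z1 z2 by (intro add_mono mult_left_mono) auto
  finally have "\<psi> z - r \<le> fst (u *\<^sub>R p + v *\<^sub>R q)"
    unfolding u by (simp add: algebra_simps)
  moreover have "G i z \<le> snd (u *\<^sub>R p + v *\<^sub>R q) $ i" for i
  proof -
    have "G i z \<le> (1 - v) * G i z1 + v * G i z2"
      unfolding z_def using uv by (intro convex_onD[OF cG]) auto
    also have "\<dots> \<le> (1 - v) * snd p $ i + v * snd q $ i"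
      using uv z1 z2 by (intro add_mono mult_left_mono) auto
    finally show ?thesis unfolding u by simp
  qed
  ultimately show "u *\<^sub>R p + v *\<^sub>R q \<in> {p. \<exists>z. \<psi> z - r \<le> fst p \<and> (\<forall>i. G i z \<le> snd p $ i)}"
    by auto
qed

lemma nonneg_functional_separating_negative_orthant:
  fixes T :: "(real \<times> (real^'m::finite)) set"
  assumes "convex T" and "p0 \<in> T"
    and disj: "\<And>p. p \<in> T \<Longrightarrow> \<not> (fst p < 0 \<and> (\<forall>i. snd p $ i < 0))"
    and up: "\<And>p n m. p \<in> T \<Longrightarrow> 0 \<le> n \<Longrightarrow> (\<And>i. 0 \<le> m $ i) \<Longrightarrow> p + (n, m) \<in> T"
  obtains a0 and a :: "real^'m" where "0 \<le> a0" "\<And>i. 0 \<le> a $ i" "(a0, a) \<noteq> 0"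
    "\<And>p. p \<in> T \<Longrightarrow> 0 \<le> a0 * fst p + (\<Sum>i\<in>UNIV. a $ i * snd p $ i)"
proof -
  define S :: "(real \<times> (real^'m)) set" where "S = {p. fst p < 0 \<and> (\<forall>i. snd p $ i < 0)}"
  have "convex S" unfolding convex_def S_def by (auto intro!: convex_bound_lt)
  moreover have "(-1, \<chi> i. -1) \<in> S" by (simp add: S_def)
  hence "S \<noteq> {}" by blast
  moreover have "T \<noteq> {}" using \<open>p0 \<in> T\<close> by blast
  moreover have "S \<inter> T = {}" using disj by (auto simp: S_def)
  ultimately obtain a b where a: "a \<noteq> 0" and aS: "\<And>p. p \<in> S \<Longrightarrow> a \<bullet> p \<le> b"
    and aT: "\<And>p. p \<in> T \<Longrightarrow> b \<le> a \<bullet> p"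
    using separating_hyperplane_sets[OF \<open>convex S\<close> \<open>convex T\<close>] by blast
  obtain a0 a1 where a_eq: "a = (a0, a1)" by (cases a)
  have "0 \<le> a0"
  proof (rule nonneg_if_lower_bound_along_ray)
    fix n :: real assume "n > 0"
    from aT[OF up[OF \<open>p0 \<in> T\<close>, of n 0]] this show "b \<le> a \<bullet> p0 + n * a0"
      by (simp add: a_eq inner_add_right mult.commute)
  qed
  moreover have "0 \<le> a1 $ i" for i
  proof (rule nonneg_if_lower_bound_along_ray)
    fix n :: real assume "n > 0"
    hence "\<And>j. 0 \<le> (n *\<^sub>R axis i (1::real)) $ j" by (simp add: axis_def)
    from aT[OF up[OF \<open>p0 \<in> T\<close> order_refl this]] show "b \<le> a \<bullet> p0 + n * a1 $ i"
      by (simp add: a_eq inner_add_right inner_axis)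
  qed
  moreover have "0 \<le> a0 * fst p + (\<Sum>i\<in>UNIV. a1 $ i * snd p $ i)" if "p \<in> T" for p
  proof -
    have "- (a0 * fst p + (\<Sum>i\<in>UNIV. a1 $ i * snd p $ i)) \<le> 0"
    proof (rule nonpos_if_le_eps_mult)
      fix e :: real assume e: "e > 0"
      have "(-e, \<chi> i. -e) \<in> S" using e by (simp add: S_def)
      from aS[OF this] have "- e * (a0 + (\<Sum>i\<in>UNIV. a1 $ i)) \<le> b"
        by (simp add: a_eq inner_vec_def sum_distrib_left algebra_simps)
      moreover have "b \<le> a0 * fst p + (\<Sum>i\<in>UNIV. a1 $ i * snd p $ i)"
        using aT[OF that] by (simp add: a_eq inner_vec_def inner_prod_def mult.commute)
      ultimately show "- (a0 * fst p + (\<Sum>i\<in>UNIV. a1 $ i * snd p $ i))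
          \<le> e * (a0 + (\<Sum>i\<in>UNIV. a1 $ i))" by linarith
    qed
    thus ?thesis by linarith
  qed
  ultimately show ?thesis using that a a_eq by blast
qed

lemma convex_fritz_john:
  fixes \<psi> :: "'a::euclidean_space \<Rightarrow> real" and G :: "'m::finite \<Rightarrow> 'a \<Rightarrow> real"
  assumes c\<psi>: "convex_on UNIV \<psi>" and cG: "\<And>i. convex_on UNIV (G i)"
    and feas0: "\<And>i. G i x0 \<le> 0"
    and opt: "\<And>z. (\<forall>i. G i z \<le> 0) \<Longrightarrow> \<psi> x0 \<le> \<psi> z"
  obtains a0 and a :: "real^'m" where "0 \<le> a0" "\<And>i. 0 \<le> a $ i" "(a0, a) \<noteq> 0"
    "\<And>z. 0 \<le> a0 * (\<psi> z - \<psi> x0) + (\<Sum>i\<in>UNIV. a $ i * G i z)"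
proof -
  define T :: "(real \<times> (real^'m)) set"
    where "T = {p. \<exists>z. \<psi> z - \<psi> x0 \<le> fst p \<and> (\<forall>i. G i z \<le> snd p $ i)}"
  have attained: "(\<psi> z - \<psi> x0, \<chi> i. G i z) \<in> T" for z by (auto simp: T_def)
  have "convex T" unfolding T_def by (rule convex_dominated_values[OF c\<psi> cG])
  moreover have "(0, 0) \<in> T" unfolding T_def using feas0 by auto
  moreover have "\<not> (fst p < 0 \<and> (\<forall>i. snd p $ i < 0))" if "p \<in> T" for p
  proof
    assume neg: "fst p < 0 \<and> (\<forall>i. snd p $ i < 0)"
    obtain z where z: "\<psi> z - \<psi> x0 \<le> fst p" "\<And>i. G i z \<le> snd p $ i"
      using \<open>p \<in> T\<close> by (auto simp: T_def)
    have "\<forall>i. G i z \<le> 0"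
    proof
      fix i
      have "snd p $ i < 0" using neg by blast
      thus "G i z \<le> 0" using z(2)[of i] by linarith
    qed
    hence "\<psi> x0 \<le> \<psi> z" by (rule opt)
    thus False using z(1) neg by linarith
  qed
  moreover have "p + (n, m) \<in> T" if p: "p \<in> T" and nm: "0 \<le> n" "\<And>i. 0 \<le> m $ i" for p n m
  proof -
    obtain z where z: "\<psi> z - \<psi> x0 \<le> fst p" "\<And>i. G i z \<le> snd p $ i"
      using p by (auto simp: T_def)
    hence "\<psi> z - \<psi> x0 \<le> fst (p + (n, m))" "\<And>i. G i z \<le> snd (p + (n, m)) $ i"
      using nm by (auto intro: add_increasing2)
    thus ?thesis by (auto simp: T_def)
  qed
  ultimately show ?thesis
  proof (rule nonneg_functional_separating_negative_orthant)
    fix a0 a assume a: "0 \<le> a0" "\<And>i. 0 \<le> a $ i" "(a0, a) \<noteq> 0"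
      and sep: "\<And>p. p \<in> T \<Longrightarrow> 0 \<le> a0 * fst p + (\<Sum>i\<in>UNIV. a $ i * snd p $ i)"
    have "0 \<le> a0 * (\<psi> z - \<psi> x0) + (\<Sum>i\<in>UNIV. a $ i * G i z)" for z
      using sep[OF attained[of z]] by simp
    with a show thesis by (rule that)
  qed
qed

lemma pos_component_sum_neg:
  fixes a :: "real^'m::finite"
  assumes "\<And>i. 0 \<le> a $ i" and "a \<noteq> 0" and "\<And>i. a $ i \<noteq> 0 \<Longrightarrow> G i < 0"
  shows "(\<Sum>i\<in>UNIV. a $ i * G i) < 0"
proof -
  have le: "a $ j * G j \<le> 0" for j
    using assms(1,3)[of j] by (cases "a $ j = 0") (auto simp: mult_nonneg_nonpos)
  obtain i where "a $ i \<noteq> 0" using assms(2) by (auto simp: vec_eq_iff)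
  hence "a $ i > 0" "G i < 0" using assms(1,3)[of i] by auto
  hence "a $ i * G i < 0" by (simp add: mult_pos_neg)
  moreover have "(\<Sum>j\<in>UNIV - {i}. a $ j * G j) \<le> 0" using le by (intro sum_nonpos) simp
  ultimately show ?thesis by (simp add: sum.remove[of UNIV i])
qed

lemma convex_kkt_slater:
  fixes \<psi> :: "'a::euclidean_space \<Rightarrow> real" and G :: "'m::finite \<Rightarrow> 'a \<Rightarrow> real"
  assumes c\<psi>: "convex_on UNIV \<psi>" and cG: "\<And>i. convex_on UNIV (G i)"
    and feas0: "\<And>i. G i x0 \<le> 0"
    and opt: "\<And>z. (\<forall>i. G i z \<le> 0) \<Longrightarrow> \<psi> x0 \<le> \<psi> z"
    and slater: "\<And>i. G i x\<^sub>S < 0"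
  shows "\<exists>\<mu>::real^'m. (\<forall>i. 0 \<le> \<mu> $ i \<and> \<mu> $ i * G i x0 = 0) \<and>
           (\<forall>z. \<psi> x0 \<le> \<psi> z + (\<Sum>i\<in>UNIV. \<mu> $ i * G i z))"
proof -
  obtain a0 a where a0: "0 \<le> a0" and a: "\<And>i. 0 \<le> a $ i" and ne: "(a0, a) \<noteq> 0"
    and fj: "\<And>z. 0 \<le> a0 * (\<psi> z - \<psi> x0) + (\<Sum>i\<in>UNIV. a $ i * G i z)"
    using convex_fritz_john[where \<psi>=\<psi> and G=G, OF c\<psi> cG feas0 opt] by blast
  have "a0 \<noteq> 0"
  proof
    assume "a0 = 0"
    hence "a \<noteq> 0" using ne by (simp add: zero_prod_def)
    hence "(\<Sum>i\<in>UNIV. a $ i * G i x\<^sub>S) < 0"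
      by (intro pos_component_sum_neg a slater)
    with fj[of x\<^sub>S] \<open>a0 = 0\<close> show False by simp
  qed
  hence a0: "a0 > 0" using a0 by simp
  define \<mu> where "\<mu> = (1 / a0) *\<^sub>R a"
  have lag: "\<psi> x0 \<le> \<psi> z + (\<Sum>i\<in>UNIV. \<mu> $ i * G i z)" for z
    using fj[of z] a0 by (simp add: \<mu>_def sum_divide_distrib[symmetric] field_simps)
  have nn: "0 \<le> \<mu> $ i" for i using a[of i] a0 by (simp add: \<mu>_def)
  have "(\<Sum>i\<in>UNIV. - (\<mu> $ i * G i x0)) = 0"
    using lag[of x0] nn feas0 by (intro antisym sum_nonneg) (auto simp: sum_negf mult_nonneg_nonpos)
  hence "\<forall>i. \<mu> $ i * G i x0 = 0"
    using nn feas0 by (subst (asm) sum_nonneg_eq_0_iff) (auto simp: mult_nonneg_nonpos)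
  thus ?thesis using nn lag by blast
qed

section \<open>The linearized constraints\<close>

lemma Gbar_same_point [simp]: "Gbar g gradg y y w i = g i y"
  by (simp add: Gbar_def)

lemma Gbar_along_direction:
  "Gbar g gradg (y + s *\<^sub>R d) y w i = g i y + s * (gradg i y \<bullet> d) + s\<^sup>2 * (w $ i / 2 * (norm d)\<^sup>2)"
  by (simp add: Gbar_def power_mult_distrib)

lemma convex_Gbar: "w $ i \<ge> 0 \<Longrightarrow> convex_on UNIV (\<lambda>z. Gbar g gradg z y w i)"
  unfolding Gbar_def
  using convex_on_add[OF convex_on_inner_affine[of "gradg i y" y "g i y"]
      convex_on_cmul[OF _ convex_on_norm_diff_squared, of "w $ i / 2" y]]
  by (simp add: algebra_simps)

lemma Gbar_tendsto:
  assumes "\<And>i. continuous_on UNIV (g i)" "\<And>i. continuous_on UNIV (gradg i)"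
    and "(X \<longlongrightarrow> a) F" "(Y \<longlongrightarrow> b) F" "(W \<longlongrightarrow> w) F"
  shows "((\<lambda>n. Gbar g gradg (X n) (Y n) (W n) i) \<longlongrightarrow> Gbar g gradg a b w i) F"
  unfolding Gbar_def
  by (intro tendsto_intros continuous_on_UNIV_tendsto[OF assms(1)]
      continuous_on_UNIV_tendsto[OF assms(2)] assms(3-5)) simp

lemma has_derivative_Gbar:
  fixes g :: "'m::finite \<Rightarrow> 'a::euclidean_space \<Rightarrow> real" and Hb :: "'a \<Rightarrow>\<^sub>L 'a"
  assumes dg: "(g i has_derivative (\<lambda>h. gradg i b \<bullet> h)) (at b)"
    and dH: "(gradg i has_derivative blinfun_apply Hb) (at b)"
  shows "((\<lambda>z::'a \<times> 'a \<times> (real^'m). Gbar g gradg (fst z) (fst (snd z)) (snd (snd z)) i) has_derivative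
     (\<lambda>h. gradg i b \<bullet> fst h + Hb (fst (snd h)) \<bullet> (a - b) + snd (snd h) $ i / 2 * ((a - b) \<bullet> (a - b))
        + w $ i * ((a - b) \<bullet> (fst h - fst (snd h))))) (at (a, b, w))"
proof -
  let ?p = "(a, b, w) :: 'a \<times> 'a \<times> (real^'m)"
  have dx: "(fst has_derivative fst) (at ?p)"
    by (intro bounded_linear_imp_has_derivative bounded_linear_fst)
  have dy: "((\<lambda>z. fst (snd z)) has_derivative (\<lambda>h. fst (snd h))) (at ?p)"
    by (intro bounded_linear_imp_has_derivative
        bounded_linear_compose[OF bounded_linear_fst bounded_linear_snd])
  have dw: "((\<lambda>z. snd (snd z) $ i / 2) has_derivative (\<lambda>h. snd (snd h) $ i / 2)) (at ?p)"
    by (intro bounded_linear_imp_has_derivative bounded_linear_compose[OF bounded_linear_divide]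
        bounded_linear_compose[OF bounded_linear_vec_nth]
        bounded_linear_compose[OF bounded_linear_snd bounded_linear_snd])
  have g1: "((\<lambda>z. g i (fst (snd z))) has_derivative (\<lambda>h. gradg i b \<bullet> fst (snd h))) (at ?p)"
    using has_derivative_compose[OF dy, of "g i"] dg by simp
  have g2: "((\<lambda>z. gradg i (fst (snd z))) has_derivative (\<lambda>h. Hb (fst (snd h)))) (at ?p)"
    using has_derivative_compose[OF dy, of "gradg i"] dH by simp
  have dxy: "((\<lambda>z. fst z - fst (snd z)) has_derivative (\<lambda>h. fst h - fst (snd h))) (at ?p)"
    by (intro has_derivative_diff dx dy)
  from has_derivative_add[OF has_derivative_add[OF g1 has_derivative_inner[OF g2 dxy]]
      has_derivative_mult[OF dw has_derivative_inner[OF dxy dxy]]]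
  show ?thesis unfolding Gbar_def power2_norm_eq_inner
    by (rule has_derivative_eq_rhs)
      (auto simp: fun_eq_iff inner_diff_left inner_diff_right inner_commute algebra_simps)
qed

lemma has_derivative_Gbar_fixed_base:
  fixes g :: "'m::finite \<Rightarrow> 'a::euclidean_space \<Rightarrow> real"
  shows "((\<lambda>z::'a \<times> 'a \<times> (real^'m). Gbar g gradg (fst z) y w i) has_derivative
     (\<lambda>h. gradg i y \<bullet> fst h + w $ i * ((a - y) \<bullet> fst h))) (at (a, b, w'))"
proof -
  have dx: "((\<lambda>z::'a \<times> 'a \<times> (real^'m). fst z - y) has_derivative fst) (at (a, b, w'))"
    by (rule has_derivative_eq_rhs, rule has_derivative_diff[OF
          bounded_linear_imp_has_derivative[OF bounded_linear_fst] has_derivative_const]) auto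
  from has_derivative_add[OF has_derivative_add[OF has_derivative_const
      has_derivative_inner[OF has_derivative_const dx]]
      has_derivative_mult[OF has_derivative_const has_derivative_inner[OF dx dx]]]
  show ?thesis unfolding Gbar_def power2_norm_eq_inner
    by (rule has_derivative_eq_rhs) (auto simp: fun_eq_iff inner_commute algebra_simps)
qed

lemma has_derivative_Gbar_change_of_base:
  fixes g :: "'m::finite \<Rightarrow> 'a::euclidean_space \<Rightarrow> real" and Hb :: "'a \<Rightarrow>\<^sub>L 'a"
  assumes "(g i has_derivative (\<lambda>h. gradg i b \<bullet> h)) (at b)"
    and "(gradg i has_derivative blinfun_apply Hb) (at b)"
  shows "((\<lambda>z::'a \<times> 'a \<times> (real^'m).
      Gbar g gradg (fst z) (fst (snd z)) (snd (snd z)) i - Gbar g gradg (fst z) b w i) has_derivative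
     (\<lambda>h. Hb (fst (snd h)) \<bullet> (a - b) + snd (snd h) $ i / 2 * ((a - b) \<bullet> (a - b))
        - w $ i * ((a - b) \<bullet> fst (snd h)))) (at (a, b, w))"
  using has_derivative_diff[OF has_derivative_Gbar[where g=g and gradg=gradg and i=i and b=b and Hb=Hb
      and a=a and w=w, OF assms]
      has_derivative_Gbar_fixed_base[where y=b and w=w and i=i]]
  by (rule has_derivative_eq_rhs) (auto simp: fun_eq_iff inner_diff_right algebra_simps)

lemma mfcq_Gbar_slater_point:
  assumes feas: "feas g y" and d: "\<And>i. g i y = 0 \<Longrightarrow> gradg i y \<bullet> d < 0"
    and w: "\<And>i. 0 \<le> w $ i"
  shows "\<exists>z. \<forall>i. Gbar g gradg z y w i < 0"
proof -
  have "\<exists>b>0. \<forall>s. 0 < s \<and> s < b \<longrightarrow> Gbar g gradg (y + s *\<^sub>R d) y w i < 0" for i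
    unfolding Gbar_along_direction
    using feas d w by (intro quadratic_negative_near_zero) (auto simp: feas_def)
  then obtain b where b: "\<And>i. b i > 0"
    and neg: "\<And>i s. 0 < s \<Longrightarrow> s < b i \<Longrightarrow> Gbar g gradg (y + s *\<^sub>R d) y w i < 0"
    by metis
  have m: "0 < Min (range b)" "\<And>i. Min (range b) \<le> b i" using b by (subst Min_gr_iff) auto
  have "Min (range b) / 2 < b i" for i using m(1) m(2)[of i] by linarith
  thus ?thesis using neg m(1) half_gt_zero by blast
qed

text \<open>An abnormal multiplier of the limit subproblem would make this sum nonnegative for every z.\<close>

lemma mfcq_excludes_abnormal_multiplier:
  fixes \<mu> :: "real^'m::finite"
  assumes feas: "feas g y" and d: "\<And>i. g i y = 0 \<Longrightarrow> gradg i y \<bullet> d < 0"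
    and \<mu>: "\<And>i. 0 \<le> \<mu> $ i" "\<mu> \<noteq> 0" and compl: "\<And>i. \<mu> $ i * g i y = 0"
    and w: "\<And>i. 0 \<le> w $ i"
  shows "\<exists>z. (\<Sum>i\<in>UNIV. \<mu> $ i * Gbar g gradg z y w i) < 0"
proof -
  define B where "B = (\<Sum>i\<in>UNIV. \<mu> $ i * (gradg i y \<bullet> d))"
  define C where "C = (\<Sum>i\<in>UNIV. \<mu> $ i * (w $ i / 2 * (norm d)\<^sup>2))"
  have "B < 0"
    unfolding B_def
  proof (rule pos_component_sum_neg[OF \<mu>])
    show "\<mu> $ i \<noteq> 0 \<Longrightarrow> gradg i y \<bullet> d < 0" for i using compl[of i] d[of i] by simp
  qed
  moreover have "C \<ge> 0" unfolding C_def using \<mu>(1) w by (intro sum_nonneg) simp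
  ultimately obtain b where b: "b > 0" and neg: "\<And>s. 0 < s \<Longrightarrow> s < b \<Longrightarrow> 0 + s * B + s\<^sup>2 * C < 0"
    using quadratic_negative_near_zero[of 0 C B] by auto
  have "(\<Sum>i\<in>UNIV. \<mu> $ i * Gbar g gradg (y + (b/2) *\<^sub>R d) y w i) = (b/2) * B + (b/2)\<^sup>2 * C"
    by (simp add: Gbar_along_direction B_def C_def distrib_left sum.distrib sum_distrib_left
        compl algebra_simps)
  moreover have "(b/2) * B + (b/2)\<^sup>2 * C < 0" using neg[of "b/2"] b by simp
  ultimately have "(\<Sum>i\<in>UNIV. \<mu> $ i * Gbar g gradg (y + (b/2) *\<^sub>R d) y w i) < 0" by simp
  thus ?thesis by blast
qed

lemma linearized_constraint_variation_bound:
  fixes Hm :: "'a::real_inner \<Rightarrow>\<^sub>L 'a"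
  assumes Hm: "norm Hm \<le> MH" and hy: "norm hy \<le> N" and hw: "\<bar>hw\<bar> \<le> N" and w: "\<bar>w\<bar> \<le> W"
    and d: "norm d \<le> \<Delta>"
  shows "\<bar>Hm hy \<bullet> d + hw / 2 * (d \<bullet> d) - w * (d \<bullet> hy)\<bar> \<le> (MH + \<Delta> / 2 + W) * (norm d * N)"
proof -
  have MH: "0 \<le> MH" using Hm norm_ge_zero order_trans by blast
  have \<Delta>: "0 \<le> \<Delta>" using d norm_ge_zero order_trans by blast
  have "\<bar>Hm hy \<bullet> d\<bar> \<le> norm Hm * norm hy * norm d"
    using Cauchy_Schwarz_ineq2[of "Hm hy" d] norm_blinfun[of Hm hy]
    by (meson mult_right_mono norm_ge_zero order_trans)
  also have "\<dots> \<le> MH * N * norm d" using Hm hy MH by (intro mult_right_mono mult_mono) auto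
  finally have 1: "\<bar>Hm hy \<bullet> d\<bar> \<le> MH * (norm d * N)" by (simp add: algebra_simps)
  have "\<bar>hw / 2 * (d \<bullet> d)\<bar> = \<bar>hw\<bar> / 2 * (norm d * norm d)"
    by (simp add: abs_mult dot_square_norm power2_eq_square)
  also have "\<dots> \<le> N / 2 * (\<Delta> * norm d)" using hw d \<Delta> by (intro mult_mono) auto
  finally have 2: "\<bar>hw / 2 * (d \<bullet> d)\<bar> \<le> \<Delta> / 2 * (norm d * N)" by (simp add: algebra_simps)
  have "\<bar>w * (d \<bullet> hy)\<bar> \<le> W * (norm d * norm hy)"
    using w Cauchy_Schwarz_ineq2[of d hy] by (simp add: abs_mult mult_mono)
  also have "\<dots> \<le> W * (norm d * N)" using hy w by (intro mult_left_mono) auto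
  finally have 3: "\<bar>w * (d \<bullet> hy)\<bar> \<le> W * (norm d * N)" .
  show ?thesis using 1 2 3 by (simp add: algebra_simps)
qed

lemma minorant_derivative_bound:
  fixes l w hw :: "real^'m::finite" and d hx hy :: "'a::euclidean_space"
    and Hm :: "'m \<Rightarrow> 'a \<Rightarrow>\<^sub>L 'a" and h :: "'a \<times> 'a \<times> (real^'m)"
  assumes h: "h = (hx, hy, hw)"
    and Hm: "\<And>i. norm (Hm i) \<le> MH" and w: "\<And>i. \<bar>w $ i\<bar> \<le> W" and l: "norm l \<le> B"
    and d: "norm d \<le> \<Delta>" and V: "norm V \<le> C * norm d"
  shows "\<bar>(\<Sum>i\<in>UNIV. l $ i * (Hm i hy \<bullet> d + hw $ i / 2 * (d \<bullet> d) - w $ i * (d \<bullet> hy))) + V \<bullet> hx\<bar>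
    \<le> (C + of_nat CARD('m) * (B * (MH + \<Delta> / 2 + W))) * norm d * norm h"
proof -
  have hx: "norm hx \<le> norm h" and hy: "norm hy \<le> norm h" and hw: "\<And>i. \<bar>hw $ i\<bar> \<le> norm h"
    unfolding h using norm_fst_le[of hx "(hy, hw)"] norm_snd_le[of "(hy, hw)" hx]
      norm_fst_le[of hy hw] norm_snd_le[of hw hy] component_le_norm_cart[of hw]
    by (auto intro: order_trans)
  have B: "0 \<le> B" using l norm_ge_zero order_trans by blast
  have summand: "\<bar>Hm i hy \<bullet> d + hw $ i / 2 * (d \<bullet> d) - w $ i * (d \<bullet> hy)\<bar>
      \<le> (MH + \<Delta> / 2 + W) * (norm d * norm h)" for i
    by (rule linearized_constraint_variation_bound[OF Hm hy hw w d])
  have "\<bar>\<Sum>i\<in>UNIV. l $ i * (Hm i hy \<bullet> d + hw $ i / 2 * (d \<bullet> d) - w $ i * (d \<bullet> hy))\<bar>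
      \<le> of_nat CARD('m) * (B * ((MH + \<Delta> / 2 + W) * (norm d * norm h)))"
  proof (rule order_trans[OF sum_abs sum_bounded_above])
    fix i
    have "\<bar>l $ i\<bar> \<le> B" using component_le_norm_cart[of l i] l by linarith
    thus "\<bar>l $ i * (Hm i hy \<bullet> d + hw $ i / 2 * (d \<bullet> d) - w $ i * (d \<bullet> hy))\<bar>
        \<le> B * ((MH + \<Delta> / 2 + W) * (norm d * norm h))"
      unfolding abs_mult using summand[of i] B by (intro mult_mono) auto
  qed
  moreover have "\<bar>V \<bullet> hx\<bar> \<le> C * norm d * norm h"
    using Cauchy_Schwarz_ineq2[of V hx] V hx
    by (meson mult_mono norm_ge_zero order_trans zero_le_mult_iff)
  ultimately show ?thesis by (simp add: algebra_simps)
qed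

section \<open>The subproblem\<close>

lemma convex_sub_obj:
  "L \<ge> 0 \<Longrightarrow> convex_on UNIV P1 \<Longrightarrow> convex_on UNIV (sub_obj gradf P1 y v L)"
  unfolding sub_obj_def
  by (intro convex_on_add convex_on_cmul convex_on_inner_affine[where k=0, simplified]
      convex_on_norm_diff_squared) auto

lemma sub_obj_tendsto:
  assumes "continuous_on UNIV gradf" "continuous_on UNIV P1"
    and "(Y \<longlongrightarrow> y) F" "(V \<longlongrightarrow> v) F" "(L \<longlongrightarrow> l) F" "(Z \<longlongrightarrow> z) F"
  shows "((\<lambda>n. sub_obj gradf P1 (Y n) (V n) (L n) (Z n)) \<longlongrightarrow> sub_obj gradf P1 y v l z) F"
  unfolding sub_obj_def
  by (intro tendsto_intros continuous_on_UNIV_tendsto[OF assms(1)]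
      continuous_on_UNIV_tendsto[OF assms(2)] assms(3-6)) simp

lemma subproblem_kkt:
  assumes sol: "solves_sub gradf P1 g gradg y v L w z"
    and P1: "convex_on UNIV P1" and L: "L \<ge> 0" and w: "\<And>i. 0 \<le> w $ i"
    and slater: "\<And>i. Gbar g gradg z\<^sub>S y w i < 0"
  shows "\<exists>\<mu>::real^'m::finite. (\<forall>i. 0 \<le> \<mu> $ i \<and> \<mu> $ i * Gbar g gradg z y w i = 0) \<and>
           (\<forall>u. sub_obj gradf P1 y v L z
                  \<le> sub_obj gradf P1 y v L u + (\<Sum>i\<in>UNIV. \<mu> $ i * Gbar g gradg u y w i))"
proof (rule convex_kkt_slater[OF convex_sub_obj[OF L P1] convex_Gbar[OF w]])
  show "\<And>i. Gbar g gradg z y w i \<le> 0"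
    and "\<And>u. \<forall>i. Gbar g gradg u y w i \<le> 0 \<Longrightarrow> sub_obj gradf P1 y v L z \<le> sub_obj gradf P1 y v L u"
    using sol by (auto simp: solves_sub_def)
qed (rule slater)

text \<open>The quadratic terms of the subproblem vanish to first order at its base point, so the
  Lagrangian inequality yields a Frechet subgradient of P1.\<close>

lemma stationary_if_base_point_kkt:
  assumes feas: "feas g y" and v: "v \<in> lsubdiff P2 y" and L: "L \<ge> 0" and w: "\<And>i. 0 \<le> w $ i"
    and l: "\<And>i. 0 \<le> l $ i" "\<And>i. l $ i * g i y = 0"
    and lag: "\<And>z. sub_obj gradf P1 y v L y
                \<le> sub_obj gradf P1 y v L z + (\<Sum>i\<in>UNIV. l $ i * Gbar g gradg z y w i)"
  shows "stationary f gradf P1 P2 g gradg y"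
proof -
  define gs where "gs = (\<Sum>i\<in>UNIV. l $ i *\<^sub>R gradg i y)"
  define K where "K = L / 2 + (\<Sum>i\<in>UNIV. l $ i * (w $ i / 2))"
  define u where "u = - (gradf y - v + gs)"
  have K: "K \<ge> 0" unfolding K_def using L l(1) w by (intro add_nonneg_nonneg sum_nonneg) auto
  have "P1 y + (u \<bullet> (z - y) - K * (norm (z - y))\<^sup>2) \<le> P1 z" for z
  proof -
    have "(\<Sum>i\<in>UNIV. l $ i * Gbar g gradg z y w i)
        = gs \<bullet> (z - y) + (\<Sum>i\<in>UNIV. l $ i * (w $ i / 2)) * (norm (z - y))\<^sup>2"
      by (simp add: Gbar_def gs_def distrib_left sum.distrib l(2) inner_sum_left
          sum_distrib_right mult.assoc)
    thus ?thesis using lag[of z]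
      by (simp add: sub_obj_def u_def K_def inner_add_left inner_diff_left algebra_simps)
  qed
  hence "u \<in> lsubdiff P1 y"
    unfolding lsubdiff_def using K
    by (intro frechet_subdiff_imp_lim_subdiff frechet_subdiff_of_quadratic_minorant[where r=1]) auto
  moreover have "gradf y + u - v + (\<Sum>i\<in>UNIV. l $ i *\<^sub>R gradg i y) = 0" by (simp add: u_def gs_def)
  ultimately show ?thesis
    unfolding stationary_def using feas v l by blast
qed

section \<open>Consecutive terms of bounded sequences\<close>

lemma cluster_point_sequence:
  fixes x :: "nat \<Rightarrow> 'a::euclidean_space"
  assumes "bounded (range x)" and "\<And>n. \<sigma> n \<ge> n"
  obtains r l where "strict_mono r" "\<And>n. \<sigma> (r n) \<ge> n" "(\<lambda>n. x (\<sigma> (r n))) \<longlonglongrightarrow> l"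
proof -
  have "bounded (range (x \<circ> \<sigma>))" using assms(1) by (rule bounded_subset) auto
  then obtain l r where "strict_mono r" "((x \<circ> \<sigma>) \<circ> r) \<longlonglongrightarrow> l"
    using bounded_imp_convergent_subsequence by blast
  moreover have "\<sigma> (r n) \<ge> n" for n using assms(2)[of "r n"] seq_suble[OF \<open>strict_mono r\<close>, of n] by simp
  ultimately show ?thesis using that by (auto simp: o_def)
qed

lemma eventually_in_open_if_cluster_points_in:
  fixes x :: "nat \<Rightarrow> 'a::euclidean_space"
  assumes bdd: "bounded (range x)" and "open \<Gamma>"
    and cl: "\<And>\<sigma> l. (\<And>n. \<sigma> n \<ge> n) \<Longrightarrow> (\<lambda>n. x (\<sigma> n)) \<longlonglongrightarrow> l \<Longrightarrow> l \<in> \<Gamma>"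
  shows "\<exists>T. \<forall>t\<ge>T. x t \<in> \<Gamma>"
proof (rule ccontr)
  assume "\<not> ?thesis"
  then obtain \<sigma> where \<sigma>: "\<And>n. \<sigma> n \<ge> n" "\<And>n. x (\<sigma> n) \<notin> \<Gamma>" by metis
  obtain r l where r: "\<And>n. \<sigma> (r n) \<ge> n" and lim: "(\<lambda>n. x (\<sigma> (r n))) \<longlonglongrightarrow> l"
    using cluster_point_sequence[OF bdd \<sigma>(1)] by blast
  have "eventually (\<lambda>n. x (\<sigma> (r n)) \<in> \<Gamma>) sequentially"
    using topological_tendstoD[OF lim \<open>open \<Gamma>\<close> cl[OF r lim]] .
  with \<sigma>(2) show False by (auto simp: eventually_sequentially)
qed

text \<open>Otherwise a subsequence of violating steps clusters at a point of \<Gamma>, where the local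
  Lipschitz bound applies to both consecutive terms.\<close>

lemma eventually_lipschitz_on_consecutive_terms:
  fixes x :: "nat \<Rightarrow> 'a::euclidean_space" and G :: "'a \<Rightarrow> 'b::real_normed_vector"
  assumes bdd: "bounded (range x)" and dx: "(\<lambda>t. x (Suc t) - x t) \<longlonglongrightarrow> 0" and "open \<Gamma>"
    and cl: "\<And>\<sigma> l. (\<And>n. \<sigma> n \<ge> n) \<Longrightarrow> (\<lambda>n. x (\<sigma> n)) \<longlonglongrightarrow> l \<Longrightarrow> l \<in> \<Gamma>"
    and lip: "\<And>z. z \<in> \<Gamma> \<Longrightarrow> \<exists>e>0. \<exists>K. \<forall>y\<in>ball z e \<inter> \<Gamma>. \<forall>w\<in>ball z e \<inter> \<Gamma>.
                  norm (G y - G w) \<le> K * norm (y - w)"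
  shows "\<exists>K T. \<forall>t\<ge>T. norm (G (x (Suc t)) - G (x t)) \<le> K * norm (x (Suc t) - x t)"
proof (rule ccontr)
  assume contra: "\<not> ?thesis"
  have "\<exists>T. \<forall>t\<ge>T. x t \<in> \<Gamma>"
    by (rule eventually_in_open_if_cluster_points_in[OF bdd \<open>open \<Gamma>\<close>]) (fact cl)
  then obtain T where T: "\<And>t. t \<ge> T \<Longrightarrow> x t \<in> \<Gamma>" by blast
  have "\<exists>t\<ge>max n T. norm (G (x (Suc t)) - G (x t)) > real n * norm (x (Suc t) - x t)" for n
    using contra by (meson not_le)
  then obtain \<sigma> where \<sigma>T: "\<And>n. \<sigma> n \<ge> max n T"
    and big: "\<And>n. norm (G (x (Suc (\<sigma> n))) - G (x (\<sigma> n))) > real n * norm (x (Suc (\<sigma> n)) - x (\<sigma> n))"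
    by metis
  have \<sigma>: "\<sigma> n \<ge> n" for n using \<sigma>T[of n] by simp
  obtain r l where r: "strict_mono r" "\<And>n. \<sigma> (r n) \<ge> n" and lim: "(\<lambda>n. x (\<sigma> (r n))) \<longlonglongrightarrow> l"
    using cluster_point_sequence[OF bdd \<sigma>] by blast
  obtain e K where e: "e > 0" and K: "\<And>y w. y \<in> ball l e \<inter> \<Gamma> \<Longrightarrow> w \<in> ball l e \<inter> \<Gamma> \<Longrightarrow>
      norm (G y - G w) \<le> K * norm (y - w)"
    using lip[OF cl[OF r(2) lim]] by blast
  have "(\<lambda>n. x (\<sigma> (r n)) + (x (Suc (\<sigma> (r n))) - x (\<sigma> (r n)))) \<longlonglongrightarrow> l + 0"
    by (intro tendsto_intros lim LIMSEQ_compose_ge_index[OF r(2) dx])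
  hence lim1: "(\<lambda>n. x (Suc (\<sigma> (r n)))) \<longlonglongrightarrow> l" by simp
  have "eventually (\<lambda>n. x (\<sigma> (r n)) \<in> ball l e \<and> x (Suc (\<sigma> (r n))) \<in> ball l e \<and> n \<ge> nat \<lceil>K\<rceil>)
      sequentially"
    using topological_tendstoD[OF lim open_ball centre_in_ball[THEN iffD2, OF e]]
      topological_tendstoD[OF lim1 open_ball centre_in_ball[THEN iffD2, OF e]]
    by (intro eventually_conj eventually_ge_at_top)
  then obtain n where n: "x (\<sigma> (r n)) \<in> ball l e" "x (Suc (\<sigma> (r n))) \<in> ball l e" "n \<ge> nat \<lceil>K\<rceil>"
    by (auto simp: eventually_sequentially)
  let ?t = "\<sigma> (r n)"
  have "x ?t \<in> \<Gamma>" "x (Suc ?t) \<in> \<Gamma>" using T \<sigma>T[of "r n"] by auto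
  hence "norm (G (x (Suc ?t)) - G (x ?t)) \<le> K * norm (x (Suc ?t) - x ?t)" using K n by blast
  moreover have "K \<le> real (r n)" using n(3) seq_suble[OF r(1), of n] by linarith
  hence "K * norm (x (Suc ?t) - x ?t) \<le> real (r n) * norm (x (Suc ?t) - x ?t)"
    by (intro mult_right_mono) auto
  ultimately show False using big[of "r n"] by linarith
qed

section \<open>Runs of SCP_ls\<close>

definition line_search_trace ::
  "('a::euclidean_space \<Rightarrow> real) \<Rightarrow> ('a \<Rightarrow> 'a) \<Rightarrow> ('a \<Rightarrow> real) \<Rightarrow> ('a \<Rightarrow> real)
   \<Rightarrow> ('m::finite \<Rightarrow> 'a \<Rightarrow> real) \<Rightarrow> ('m \<Rightarrow> 'a \<Rightarrow> 'a) \<Rightarrow> real \<Rightarrow> real \<Rightarrow> real \<Rightarrow> real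
   \<Rightarrow> (nat \<Rightarrow> 'a) \<Rightarrow> (nat \<Rightarrow> real) \<Rightarrow> (nat \<Rightarrow> real^'m)
   \<Rightarrow> (nat \<Rightarrow> 'a) \<Rightarrow> (nat \<Rightarrow> nat) \<Rightarrow> (nat \<Rightarrow> nat \<Rightarrow> real) \<Rightarrow> (nat \<Rightarrow> nat \<Rightarrow> real^'m)
   \<Rightarrow> (nat \<Rightarrow> nat \<Rightarrow> 'a) \<Rightarrow> bool" where
  "line_search_trace f gradf P1 P2 g gradg c Lmin Lmax tau x Lf Lg xi J TLf TLg Tx \<longleftrightarrow>
     (\<forall>t. xi t \<in> lsubdiff P2 (x t) \<and>
           Lmin \<le> TLf t 0 \<and> TLf t 0 \<le> Lmax \<and>
           (\<forall>i. Lmin \<le> TLg t 0 $ i \<and> TLg t 0 $ i \<le> Lmax) \<and>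
           (\<forall>j\<le>J t. solves_sub gradf P1 g gradg (x t) (xi t) (TLf t j) (TLg t j) (Tx t j)) \<and>
           (\<forall>j<J t. \<not> accept f P1 P2 g c (x t) (Tx t j) \<and>
               (if \<not> feas g (Tx t j)
                then TLg t (Suc j) = tau *\<^sub>R TLg t j \<and> TLf t (Suc j) = TLf t j
                else TLf t (Suc j) = tau * TLf t j \<and> TLg t (Suc j) = TLg t j)) \<and>
           accept f P1 P2 g c (x t) (Tx t (J t)) \<and>
           x (Suc t) = Tx t (J t) \<and> Lf t = TLf t (J t) \<and> Lg t = TLg t (J t))"

lemma SCP_ls_iff_line_search_trace:
  "SCP_ls f gradf P1 P2 g gradg c Lmin Lmax tau x Lf Lg \<longleftrightarrow>
     feas g (x 0) \<and>
     (\<exists>xi J TLf TLg Tx. line_search_trace f gradf P1 P2 g gradg c Lmin Lmax tau x Lf Lg xi J TLf TLg Tx)"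
  unfolding SCP_ls_def line_search_trace_def by blast

locale scp_ls_run =
  fixes f P1 P2 :: "'a::euclidean_space \<Rightarrow> real" and gradf :: "'a \<Rightarrow> 'a"
    and g :: "'m::finite \<Rightarrow> 'a \<Rightarrow> real" and gradg :: "'m \<Rightarrow> 'a \<Rightarrow> 'a"
    and c Lmin Lmax tau :: real
    and x :: "nat \<Rightarrow> 'a" and Lf :: "nat \<Rightarrow> real" and Lg :: "nat \<Rightarrow> real^'m"
    and xi :: "nat \<Rightarrow> 'a" and J :: "nat \<Rightarrow> nat" and TLf :: "nat \<Rightarrow> nat \<Rightarrow> real"
    and TLg :: "nat \<Rightarrow> nat \<Rightarrow> real^'m" and Tx :: "nat \<Rightarrow> nat \<Rightarrow> 'a"
    and Lfl :: real and Lgl :: "'m \<Rightarrow> real" and H :: "'m \<Rightarrow> 'a \<Rightarrow> 'a \<Rightarrow>\<^sub>L 'a"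
    and \<Gamma> :: "'a set" and gradP2 :: "'a \<Rightarrow> 'a"
  assumes problem: "problem_P f gradf P1 P2 g"
    and gradf_lipschitz: "Lfl \<ge> 0" "\<And>y z. norm (gradf y - gradf z) \<le> Lfl * norm (y - z)"
    and gradg_lipschitz: "\<And>i. Lgl i \<ge> 0" "\<And>i y z. norm (gradg i y - gradg i z) \<le> Lgl i * norm (y - z)"
    and level_bounded: "\<And>\<alpha>. bounded {z. Fobj f P1 P2 g z \<le> ereal \<alpha>}"
    and mfcq: "assumption_B g gradg"
    and hessian: "\<And>i z. (gradg i has_derivative blinfun_apply (H i z)) (at z)"
      "\<And>i. continuous_on UNIV (H i)"
    and \<Gamma>_open: "open \<Gamma>"
    and \<Gamma>_stationary: "\<And>z. stationary f gradf P1 P2 g gradg z \<Longrightarrow> z \<in> \<Gamma>"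
    and P2_deriv: "\<And>z. z \<in> \<Gamma> \<Longrightarrow> (P2 has_derivative (\<lambda>h. gradP2 z \<bullet> h)) (at z)"
    and gradP2_local_lipschitz: "\<And>z. z \<in> \<Gamma> \<Longrightarrow> \<exists>e>0. \<exists>K. \<forall>y\<in>ball z e \<inter> \<Gamma>. \<forall>w\<in>ball z e \<inter> \<Gamma>.
        norm (gradP2 y - gradP2 w) \<le> K * norm (y - w)"
    and params: "c > 0" "0 < Lmin" "tau > 1"
    and x0: "feas g (x 0)"
    and trace: "line_search_trace f gradf P1 P2 g gradg c Lmin Lmax tau x Lf Lg xi J TLf TLg Tx"
begin

lemma f_deriv: "(f has_derivative (\<lambda>h. gradf z \<bullet> h)) (at z)"
  and gradf_cont: "continuous_on UNIV gradf"
  and P1_convex: "convex_on UNIV P1" and P1_cont: "continuous_on UNIV P1"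
  and P2_convex: "convex_on UNIV P2" and P2_cont: "continuous_on UNIV P2"
  and g_cont: "continuous_on UNIV (g i)"
  using problem unfolding problem_P_def by auto

lemma g_deriv: "(g i has_derivative (\<lambda>h. gradg i z \<bullet> h)) (at z)"
  and gradg_cont: "continuous_on UNIV (gradg i)"
  and mfcq_direction: "feas g z \<Longrightarrow> \<exists>d. \<forall>i. g i z = 0 \<longrightarrow> gradg i z \<bullet> d < 0"
  using mfcq unfolding assumption_B_def by auto

definition obj :: "'a \<Rightarrow> real" where "obj z = f z + P1 z - P2 z"

lemma obj_cont: "continuous_on UNIV obj"
proof -
  have "continuous_on UNIV f"
    by (rule continuous_at_imp_continuous_on) (use f_deriv has_derivative_continuous in blast)
  thus ?thesis unfolding obj_def[abs_def] by (intro continuous_intros P1_cont P2_cont)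
qed

lemma trace_step:
  "xi t \<in> lsubdiff P2 (x t) \<and>
   Lmin \<le> TLf t 0 \<and> TLf t 0 \<le> Lmax \<and> (\<forall>i. Lmin \<le> TLg t 0 $ i \<and> TLg t 0 $ i \<le> Lmax) \<and>
   (\<forall>j\<le>J t. solves_sub gradf P1 g gradg (x t) (xi t) (TLf t j) (TLg t j) (Tx t j)) \<and>
   (\<forall>j<J t. \<not> accept f P1 P2 g c (x t) (Tx t j) \<and>
      (if \<not> feas g (Tx t j)
       then TLg t (Suc j) = tau *\<^sub>R TLg t j \<and> TLf t (Suc j) = TLf t j
       else TLf t (Suc j) = tau * TLf t j \<and> TLg t (Suc j) = TLg t j)) \<and>
   accept f P1 P2 g c (x t) (Tx t (J t)) \<and>
   x (Suc t) = Tx t (J t) \<and> Lf t = TLf t (J t) \<and> Lg t = TLg t (J t)"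
  using trace unfolding line_search_trace_def by blast

lemma step_solves_sub: "solves_sub gradf P1 g gradg (x t) (xi t) (Lf t) (Lg t) (x (Suc t))"
  using trace_step[of t] by auto

lemma step_accepted: "accept f P1 P2 g c (x t) (x (Suc t))"
  using trace_step[of t] by auto

lemma feas_iterate: "feas g (x t)"
  by (cases t) (use x0 step_accepted in \<open>auto simp: accept_def\<close>)

lemma obj_decrease: "obj (x (Suc t)) \<le> obj (x t) - c/2 * (norm (x (Suc t) - x t))\<^sup>2"
  using step_accepted[of t] by (simp add: accept_def obj_def)

lemma xi_subgradient: "P2 (x t) + xi t \<bullet> (z - x t) \<le> P2 z"
  using convex_lsubdiff_imp_subgradient[OF P2_convex P2_cont] trace_step[of t] by auto

lemma feas_if_Lg_large:
  assumes sol: "solves_sub gradf P1 g gradg y v L w z" and w: "\<And>i. w $ i \<ge> 2 * Lgl i"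
  shows "feas g z"
proof -
  have "g i z \<le> 0" for i
  proof -
    have "g i z \<le> g i y + gradg i y \<bullet> (z - y) + Lgl i * (norm (z - y))\<^sup>2"
      by (rule descent_lemma[OF g_deriv gradg_lipschitz(2) gradg_lipschitz(1)])
    also have "\<dots> \<le> Gbar g gradg z y w i"
    proof -
      have "Lgl i * (norm (z - y))\<^sup>2 \<le> w $ i / 2 * (norm (z - y))\<^sup>2"
        using w[of i] by (intro mult_right_mono) auto
      thus ?thesis by (simp add: Gbar_def)
    qed
    also have "\<dots> \<le> 0" using sol by (simp add: solves_sub_def)
    finally show ?thesis .
  qed
  thus ?thesis by (simp add: feas_def)
qed

lemma decrease_if_Lf_large:
  assumes sol: "solves_sub gradf P1 g gradg (x t) (xi t) L w z" and L: "L \<ge> 2 * Lfl + c"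
  shows "obj z \<le> obj (x t) - c/2 * (norm (z - x t))\<^sup>2"
proof -
  let ?d = "z - x t"
  have "\<forall>i. Gbar g gradg (x t) (x t) w i \<le> 0" using feas_iterate[of t] by (simp add: feas_def)
  hence "sub_obj gradf P1 (x t) (xi t) L z \<le> sub_obj gradf P1 (x t) (xi t) L (x t)"
    using sol by (simp add: solves_sub_def)
  hence "gradf (x t) \<bullet> ?d - xi t \<bullet> ?d + L/2 * (norm ?d)\<^sup>2 + P1 z \<le> P1 (x t)"
    by (simp add: sub_obj_def inner_diff_left)
  moreover have "f z \<le> f (x t) + gradf (x t) \<bullet> ?d + Lfl * (norm ?d)\<^sup>2"
    by (rule descent_lemma[OF f_deriv gradf_lipschitz(2,1)])
  moreover have "P2 (x t) + xi t \<bullet> ?d \<le> P2 z" by (rule xi_subgradient)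
  moreover have "(Lfl - L/2) * (norm ?d)\<^sup>2 \<le> (- c/2) * (norm ?d)\<^sup>2"
    using L by (intro mult_right_mono) auto
  ultimately show ?thesis unfolding obj_def by (simp add: algebra_simps)
qed

definition Lf_max :: real where "Lf_max = max Lmax (tau * (2 * Lfl + c))"

text \<open>Bound on the total growth factor of the Lg-trials: once each component reaches 2 * Lgl i the
  trial point is feasible, so Lg is enlarged at most while some component is below that.\<close>

definition Lg_growth_max :: real where "Lg_growth_max = max 1 (tau * (2 * (\<Sum>i\<in>UNIV. Lgl i)) / Lmin)"

definition Lg_max :: real where "Lg_max = Lg_growth_max * Lmax"

lemma trial_parameters_bounded:
  "j \<le> J t \<Longrightarrow> Lmin \<le> TLf t j \<and> TLf t j \<le> Lf_max \<and>
     (\<exists>k. TLg t j = tau^k *\<^sub>R TLg t 0 \<and> tau^k \<le> Lg_growth_max)"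
proof (induction j)
  case 0
  have "TLg t 0 = tau^0 *\<^sub>R TLg t 0 \<and> tau^0 \<le> Lg_growth_max" by (simp add: Lg_growth_max_def)
  hence "\<exists>k. TLg t 0 = tau^k *\<^sub>R TLg t 0 \<and> tau^k \<le> Lg_growth_max" by blast
  thus ?case using trace_step[of t] by (auto simp: Lf_max_def)
next
  case (Suc j)
  hence j: "j < J t"
    and IH: "Lmin \<le> TLf t j" "TLf t j \<le> Lf_max" "\<exists>k. TLg t j = tau^k *\<^sub>R TLg t 0 \<and> tau^k \<le> Lg_growth_max"
    by auto
  obtain k where k: "TLg t j = tau^k *\<^sub>R TLg t 0" using IH(3) by blast
  have rejected: "\<not> accept f P1 P2 g c (x t) (Tx t j)"
    and sol: "solves_sub gradf P1 g gradg (x t) (xi t) (TLf t j) (TLg t j) (Tx t j)"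
    using trace_step[of t] j by auto
  show ?case
  proof (cases "feas g (Tx t j)")
    case False
    hence upd: "TLg t (Suc j) = tau *\<^sub>R TLg t j" "TLf t (Suc j) = TLf t j"
      using trace_step[of t] j by auto
    obtain i where i: "TLg t j $ i < 2 * Lgl i" using feas_if_Lg_large[OF sol] False by (meson not_le)
    have "tau^k * Lmin \<le> tau^k * TLg t 0 $ i" using trace_step[of t] params by (intro mult_left_mono) auto
    also have "\<dots> < 2 * Lgl i" using i k by simp
    also have "\<dots> \<le> 2 * (\<Sum>i\<in>UNIV. Lgl i)"
      using member_le_sum[of i UNIV Lgl] gradg_lipschitz(1) by auto
    finally have "tau * tau^k \<le> tau * (2 * (\<Sum>i\<in>UNIV. Lgl i) / Lmin)"
      using params by (intro mult_left_mono) (auto simp: field_simps)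
    hence "TLg t (Suc j) = tau^(Suc k) *\<^sub>R TLg t 0 \<and> tau^(Suc k) \<le> Lg_growth_max"
      using upd k by (simp add: Lg_growth_max_def)
    hence "\<exists>k. TLg t (Suc j) = tau^k *\<^sub>R TLg t 0 \<and> tau^k \<le> Lg_growth_max" by blast
    thus ?thesis using IH by (simp add: upd(2))
  next
    case True
    hence upd: "TLf t (Suc j) = tau * TLf t j" "TLg t (Suc j) = TLg t j"
      using trace_step[of t] j by auto
    have "TLf t j < 2 * Lfl + c"
    proof (rule ccontr)
      assume "\<not> ?thesis"
      hence "obj (Tx t j) \<le> obj (x t) - c/2 * (norm (Tx t j - x t))\<^sup>2"
        by (intro decrease_if_Lf_large[OF sol]) auto
      with True rejected show False by (simp add: accept_def obj_def)
    qed
    hence "tau * TLf t j \<le> Lf_max"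
      using params by (simp add: Lf_max_def max.coboundedI2)
    moreover have "TLf t j \<le> tau * TLf t j" using IH params by simp
    ultimately show ?thesis using upd IH by auto
  qed
qed

lemma Lf_bounds: "Lmin \<le> Lf t" "Lf t \<le> Lf_max"
  using trial_parameters_bounded[of "J t" t] trace_step[of t] by auto

lemma Lg_bounds: "Lmin \<le> Lg t $ i" "Lg t $ i \<le> Lg_max"
proof -
  obtain k where k: "Lg t = tau^k *\<^sub>R TLg t 0" "tau^k \<le> Lg_growth_max"
    using trial_parameters_bounded[of "J t" t] trace_step[of t] by auto
  have t1: "1 \<le> tau^k" using params by simp
  have tl: "Lmin \<le> TLg t 0 $ i" "TLg t 0 $ i \<le> Lmax" using trace_step[of t] by auto
  have "1 * Lmin \<le> tau^k * TLg t 0 $ i" using t1 tl params by (intro mult_mono) auto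
  thus "Lmin \<le> Lg t $ i" using k by simp
  have "tau^k * TLg t 0 $ i \<le> Lg_growth_max * Lmax" using k tl t1 params by (intro mult_mono) (auto simp: Lg_growth_max_def)
  thus "Lg t $ i \<le> Lg_max" using k by (simp add: Lg_max_def)
qed

lemma Lg_nonneg: "0 \<le> Lg t $ i"
  using Lg_bounds(1) params by (meson less_imp_le order_trans)

lemma Lf_max_pos: "Lf_max > 0"
proof -
  have "0 < tau * (2 * Lfl + c)" using params gradf_lipschitz(1) by simp
  thus ?thesis unfolding Lf_max_def by (rule less_le_trans[OF _ max.cobounded2])
qed

lemma Lg_max_pos: "Lg_max > 0"
proof -
  have "0 < Lmax" using trace_step[of 0] params by linarith
  moreover have "0 < Lg_growth_max" by (simp add: Lg_growth_max_def)
  ultimately show ?thesis by (simp add: Lg_max_def)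
qed

lemma norm_Lg_le: "norm (Lg t) \<le> of_nat CARD('m) * Lg_max"
proof -
  have "norm (Lg t) \<le> (\<Sum>i\<in>UNIV. \<bar>Lg t $ i\<bar>)" by (rule norm_le_l1_cart)
  also have "\<dots> \<le> of_nat CARD('m) * Lg_max"
    using Lg_bounds Lg_nonneg by (intro sum_bounded_above) (simp add: abs_of_nonneg)
  finally show ?thesis .
qed

lemma obj_le_initial: "obj (x t) \<le> obj (x 0)"
proof (induction t)
  case (Suc t)
  have "0 \<le> c/2 * (norm (x (Suc t) - x t))\<^sup>2" using params by simp
  thus ?case using obj_decrease[of t] Suc by linarith
qed simp

lemma iterates_bounded: "bounded (range x)"
proof -
  have "x t \<in> {z. Fobj f P1 P2 g z \<le> ereal (obj (x 0))}" for t
    using feas_iterate[of t] obj_le_initial[of t] by (simp add: Fobj_def obj_def)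
  hence "range x \<subseteq> {z. Fobj f P1 P2 g z \<le> ereal (obj (x 0))}" by blast
  thus ?thesis by (rule bounded_subset[OF level_bounded, rotated])
qed

lemma successive_differences_tendsto_0: "(\<lambda>t. x (Suc t) - x t) \<longlonglongrightarrow> 0"
proof -
  obtain R where R: "\<And>t. norm (x t) \<le> R" using iterates_bounded by (auto simp: bounded_iff)
  obtain M where M: "\<And>z. norm z \<le> R \<Longrightarrow> norm (obj z) \<le> M"
    using continuous_on_UNIV_bounded_on_cball[OF obj_cont] by blast
  let ?a = "\<lambda>t. c/2 * (norm (x (Suc t) - x t))\<^sup>2"
  have "summable ?a"
  proof (rule summableI_nonneg_bounded)
    show "0 \<le> ?a n" for n using params by simp
    have "?a i \<le> obj (x i) - obj (x (Suc i))" for i using obj_decrease[of i] by linarith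
    hence "(\<Sum>i<n. ?a i) \<le> (\<Sum>i<n. obj (x i) - obj (x (Suc i)))" for n by (intro sum_mono)
    also have "\<dots> n = obj (x 0) - obj (x n)" for n by (rule sum_lessThan_telescope')
    also have "\<dots> n \<le> obj (x 0) + M" for n using M[OF R[of n]] by (simp add: abs_le_iff)
    finally show "(\<Sum>i<n. ?a i) \<le> obj (x 0) + M" for n .
  qed
  hence "(\<lambda>t. (2/c) * ?a t) \<longlonglongrightarrow> (2/c) * 0" by (intro tendsto_mult tendsto_const summable_LIMSEQ_zero)
  hence "(\<lambda>t. (norm (x (Suc t) - x t))\<^sup>2) \<longlonglongrightarrow> 0" using params by simp
  hence "(\<lambda>t. sqrt ((norm (x (Suc t) - x t))\<^sup>2)) \<longlonglongrightarrow> sqrt 0" by (intro tendsto_intros)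
  thus ?thesis by (simp add: tendsto_norm_zero_iff)
qed

lemma xi_bounded: "bounded (range xi)"
proof -
  obtain R where R: "\<And>t. norm (x t) \<le> R" using iterates_bounded by (auto simp: bounded_iff)
  obtain M where M: "\<And>z. norm z \<le> R + 1 \<Longrightarrow> norm (P2 z) \<le> M"
    using continuous_on_UNIV_bounded_on_cball[OF P2_cont] by blast
  have "norm (xi t) \<le> 2 * M" for t
  proof (cases "xi t = 0")
    case True
    thus ?thesis using M[of "x t"] R[of t] by simp
  next
    case False
    define u where "u = (1 / norm (xi t)) *\<^sub>R xi t"
    have "norm u = 1" "xi t \<bullet> u = norm (xi t)"
      using False by (simp_all add: u_def dot_square_norm power2_eq_square)
    hence "norm (xi t) \<le> P2 (x t + u) - P2 (x t)" using xi_subgradient[of t "x t + u"] by simp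
    also have "\<dots> \<le> M + M"
      using M[of "x t + u"] M[of "x t"] R[of t] norm_triangle_ineq[of "x t" u] \<open>norm u = 1\<close>
      by (simp add: abs_le_iff)
    finally show ?thesis by simp
  qed
  thus ?thesis by (auto simp: bounded_iff)
qed

lemma step_slater_point: "\<exists>z. \<forall>i. Gbar g gradg z (x t) (Lg t) i < 0"
  using mfcq_direction[OF feas_iterate[of t]] Lg_nonneg
  by (blast intro: mfcq_Gbar_slater_point[OF feas_iterate])

definition kkt_multiplier :: "nat \<Rightarrow> real^'m" where
  "kkt_multiplier t = (SOME \<mu>. (\<forall>i. 0 \<le> \<mu> $ i \<and> \<mu> $ i * Gbar g gradg (x (Suc t)) (x t) (Lg t) i = 0) \<and>
     (\<forall>z. sub_obj gradf P1 (x t) (xi t) (Lf t) (x (Suc t))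
            \<le> sub_obj gradf P1 (x t) (xi t) (Lf t) z + (\<Sum>i\<in>UNIV. \<mu> $ i * Gbar g gradg z (x t) (Lg t) i)))"

lemma kkt_multiplier:
  "0 \<le> kkt_multiplier t $ i"
  "kkt_multiplier t $ i * Gbar g gradg (x (Suc t)) (x t) (Lg t) i = 0"
  "sub_obj gradf P1 (x t) (xi t) (Lf t) (x (Suc t))
     \<le> sub_obj gradf P1 (x t) (xi t) (Lf t) z + (\<Sum>i\<in>UNIV. kkt_multiplier t $ i * Gbar g gradg z (x t) (Lg t) i)"
proof -
  obtain z\<^sub>S where "\<forall>i. Gbar g gradg z\<^sub>S (x t) (Lg t) i < 0" using step_slater_point by blast
  from subproblem_kkt[OF step_solves_sub P1_convex _ Lg_nonneg, where z\<^sub>S=z\<^sub>S] this Lf_bounds(1)[of t] params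
  have "\<exists>\<mu>. (\<forall>i. 0 \<le> \<mu> $ i \<and> \<mu> $ i * Gbar g gradg (x (Suc t)) (x t) (Lg t) i = 0) \<and>
     (\<forall>z. sub_obj gradf P1 (x t) (xi t) (Lf t) (x (Suc t))
            \<le> sub_obj gradf P1 (x t) (xi t) (Lf t) z + (\<Sum>i\<in>UNIV. \<mu> $ i * Gbar g gradg z (x t) (Lg t) i))"
    by auto
  from someI_ex[OF this] show
    "0 \<le> kkt_multiplier t $ i"
    "kkt_multiplier t $ i * Gbar g gradg (x (Suc t)) (x t) (Lg t) i = 0"
    "sub_obj gradf P1 (x t) (xi t) (Lf t) (x (Suc t))
       \<le> sub_obj gradf P1 (x t) (xi t) (Lf t) z + (\<Sum>i\<in>UNIV. kkt_multiplier t $ i * Gbar g gradg z (x t) (Lg t) i)"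
    unfolding kkt_multiplier_def by blast+
qed

lemma convergent_subsequence_of_run:
  fixes Y :: "nat \<Rightarrow> 'b::euclidean_space"
  assumes \<sigma>: "\<And>n. \<sigma> n \<ge> n" and Y: "bounded (range Y)"
  obtains r y w L v l where "\<And>n. r n \<ge> n"
    "(\<lambda>n. x (\<sigma> (r n))) \<longlonglongrightarrow> y" "(\<lambda>n. x (Suc (\<sigma> (r n)))) \<longlonglongrightarrow> y"
    "(\<lambda>n. Lg (\<sigma> (r n))) \<longlonglongrightarrow> w" "(\<lambda>n. Lf (\<sigma> (r n))) \<longlonglongrightarrow> L"
    "(\<lambda>n. xi (\<sigma> (r n))) \<longlonglongrightarrow> v" "(\<lambda>n. Y (r n)) \<longlonglongrightarrow> l"
proof -
  define Z where "Z n = (x (\<sigma> n), Lg (\<sigma> n), Lf (\<sigma> n), xi (\<sigma> n), Y n)" for n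
  have "bounded (range Lg)" using norm_Lg_le by (auto simp: bounded_iff)
  moreover have "norm (Lf t) \<le> Lf_max" for t using Lf_bounds[of t] params by simp
  hence "bounded (range Lf)" by (auto simp: bounded_iff)
  ultimately have "bounded (range x \<times> range Lg \<times> range Lf \<times> range xi \<times> range Y)"
    using iterates_bounded xi_bounded Y by (intro bounded_Times)
  hence "bounded (range Z)" by (rule bounded_subset) (auto simp: Z_def)
  then obtain r l where "strict_mono r" and lim: "(\<lambda>n. Z (r n)) \<longlonglongrightarrow> l"
    using bounded_imp_convergent_subsequence[OF \<open>bounded (range Z)\<close>] unfolding o_def by blast
  hence r: "\<And>n. r n \<ge> n" by (simp add: seq_suble)
  have rn: "\<sigma> (r n) \<ge> n" for n using \<sigma>[of "r n"] r[of n] by linarith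
  have X: "(\<lambda>n. x (\<sigma> (r n))) \<longlonglongrightarrow> fst l"
    using tendsto_fst[OF lim] by (simp add: Z_def)
  have "(\<lambda>n. x (\<sigma> (r n)) + (x (Suc (\<sigma> (r n))) - x (\<sigma> (r n)))) \<longlonglongrightarrow> fst l + 0"
    by (intro tendsto_intros X LIMSEQ_compose_ge_index[OF rn successive_differences_tendsto_0])
  hence X1: "(\<lambda>n. x (Suc (\<sigma> (r n)))) \<longlonglongrightarrow> fst l" by simp
  have W: "(\<lambda>n. Lg (\<sigma> (r n))) \<longlonglongrightarrow> fst (snd l)"
    using tendsto_fst[OF tendsto_snd[OF lim]] by (simp add: Z_def)
  have L: "(\<lambda>n. Lf (\<sigma> (r n))) \<longlonglongrightarrow> fst (snd (snd l))"
    using tendsto_fst[OF tendsto_snd[OF tendsto_snd[OF lim]]] by (simp add: Z_def)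
  have V: "(\<lambda>n. xi (\<sigma> (r n))) \<longlonglongrightarrow> fst (snd (snd (snd l)))"
    using tendsto_fst[OF tendsto_snd[OF tendsto_snd[OF tendsto_snd[OF lim]]]] by (simp add: Z_def)
  have Yl: "(\<lambda>n. Y (r n)) \<longlonglongrightarrow> snd (snd (snd (snd l)))"
    using tendsto_snd[OF tendsto_snd[OF tendsto_snd[OF tendsto_snd[OF lim]]]] by (simp add: Z_def)
  show ?thesis by (rule that[OF r X X1 W L V Yl])
qed

lemma limit_of_run_data:
  assumes X: "(\<lambda>n. x (tt n)) \<longlonglongrightarrow> y" and W: "(\<lambda>n. Lg (tt n)) \<longlonglongrightarrow> w"
    and L: "(\<lambda>n. Lf (tt n)) \<longlonglongrightarrow> L" and V: "(\<lambda>n. xi (tt n)) \<longlonglongrightarrow> v"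
  shows "feas g y" "Lmin \<le> L" "\<And>i. Lmin \<le> w $ i" "v \<in> lsubdiff P2 y"
proof -
  show "feas g y" unfolding feas_def
  proof
    fix i
    show "g i y \<le> 0"
      using feas_iterate
      by (intro LIMSEQ_le_const2[OF continuous_on_UNIV_tendsto[OF g_cont X]]) (auto simp: feas_def)
  qed
  show "Lmin \<le> L" using Lf_bounds by (intro LIMSEQ_le_const[OF L]) auto
  show "Lmin \<le> w $ i" for i using Lg_bounds by (intro LIMSEQ_le_const[OF tendsto_vec_nth[OF W]]) auto
  have "P2 y + v \<bullet> (z - y) \<le> P2 z" for z
  proof (rule LIMSEQ_le_const2)
    show "(\<lambda>n. P2 (x (tt n)) + xi (tt n) \<bullet> (z - x (tt n))) \<longlonglongrightarrow> P2 y + v \<bullet> (z - y)"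
      by (intro tendsto_intros continuous_on_UNIV_tendsto[OF P2_cont] X V)
  qed (use xi_subgradient in auto)
  thus "v \<in> lsubdiff P2 y"
    unfolding lsubdiff_def by (intro frechet_subdiff_imp_lim_subdiff subgradient_imp_frechet_subdiff)
qed

text \<open>With s = 1 this yields the KKT conditions of the limit subproblem; with s n the inverse norm
  of the multiplier (tending to 0) it yields an abnormal multiplier.\<close>

lemma scaled_kkt_limit:
  assumes X: "(\<lambda>n. x (tt n)) \<longlonglongrightarrow> y" "(\<lambda>n. x (Suc (tt n))) \<longlonglongrightarrow> y"
    and W: "(\<lambda>n. Lg (tt n)) \<longlonglongrightarrow> w" and L: "(\<lambda>n. Lf (tt n)) \<longlonglongrightarrow> L"
    and V: "(\<lambda>n. xi (tt n)) \<longlonglongrightarrow> v"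
    and s: "s \<longlonglongrightarrow> s0" "\<And>n. 0 \<le> s n" and M: "(\<lambda>n. s n *\<^sub>R kkt_multiplier (tt n)) \<longlonglongrightarrow> \<mu>"
  shows "0 \<le> \<mu> $ i" "\<mu> $ i * g i y = 0"
    "s0 * sub_obj gradf P1 y v L y
       \<le> s0 * sub_obj gradf P1 y v L z + (\<Sum>i\<in>UNIV. \<mu> $ i * Gbar g gradg z y w i)"
proof -
  note Gbar_lim = Gbar_tendsto[OF g_cont gradg_cont]
  note obj_lim = sub_obj_tendsto[OF gradf_cont P1_cont]
  have M_i: "(\<lambda>n. s n * kkt_multiplier (tt n) $ i) \<longlonglongrightarrow> \<mu> $ i" for i
    using tendsto_vec_nth[OF M, of i] by simp
  show "0 \<le> \<mu> $ i"
    using s(2) kkt_multiplier(1) by (intro LIMSEQ_le_const[OF M_i]) auto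
  have "(\<lambda>n. s n * kkt_multiplier (tt n) $ i * Gbar g gradg (x (Suc (tt n))) (x (tt n)) (Lg (tt n)) i)
      \<longlonglongrightarrow> \<mu> $ i * Gbar g gradg y y w i"
    by (intro tendsto_intros M_i Gbar_lim X W)
  thus "\<mu> $ i * g i y = 0" by (simp add: mult.assoc kkt_multiplier(2) LIMSEQ_const_iff)
  show "s0 * sub_obj gradf P1 y v L y
      \<le> s0 * sub_obj gradf P1 y v L z + (\<Sum>i\<in>UNIV. \<mu> $ i * Gbar g gradg z y w i)"
  proof (rule tendsto_le[OF _ _ tendsto_mult[OF s(1) obj_lim[OF X(1) V L X(2)]]])
    show "(\<lambda>n. s n * sub_obj gradf P1 (x (tt n)) (xi (tt n)) (Lf (tt n)) z
          + (\<Sum>i\<in>UNIV. s n * kkt_multiplier (tt n) $ i * Gbar g gradg z (x (tt n)) (Lg (tt n)) i))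
        \<longlonglongrightarrow> s0 * sub_obj gradf P1 y v L z + (\<Sum>i\<in>UNIV. \<mu> $ i * Gbar g gradg z y w i)"
      by (intro tendsto_intros s(1) obj_lim M_i Gbar_lim X(1) V L W)
    show "\<forall>\<^sub>F n in sequentially. s n * sub_obj gradf P1 (x (tt n)) (xi (tt n)) (Lf (tt n)) (x (Suc (tt n)))
        \<le> s n * sub_obj gradf P1 (x (tt n)) (xi (tt n)) (Lf (tt n)) z
          + (\<Sum>i\<in>UNIV. s n * kkt_multiplier (tt n) $ i * Gbar g gradg z (x (tt n)) (Lg (tt n)) i)"
      using mult_left_mono[OF kkt_multiplier(3) s(2)]
      by (simp add: distrib_left sum_distrib_left mult.assoc)
  qed simp
qed

lemma kkt_multipliers_eventually_bounded: "\<exists>B T. \<forall>t\<ge>T. norm (kkt_multiplier t) \<le> B"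
proof (rule ccontr)
  assume "\<not> ?thesis"
  hence "\<exists>t\<ge>n. norm (kkt_multiplier t) > real n" for n by (meson not_le)
  then obtain \<sigma> where \<sigma>: "\<And>n. \<sigma> n \<ge> n" "\<And>n. norm (kkt_multiplier (\<sigma> n)) > real n" by metis
  define N where "N n = norm (kkt_multiplier (\<sigma> n))" for n
  have N: "N n > 0" "N n \<ge> real n" for n using \<sigma>(2)[of n] of_nat_0_le_iff[of n] unfolding N_def by linarith+
  define \<nu> where "\<nu> n = inverse (N n) *\<^sub>R kkt_multiplier (\<sigma> n)" for n
  have norm_\<nu>: "norm (\<nu> n) = 1" for n using N(1)[of n] by (simp add: \<nu>_def N_def)
  hence "bounded (range \<nu>)" by (auto simp: bounded_iff)
  then obtain r y w L v \<mu> where r: "\<And>n. r n \<ge> n"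
    and X: "(\<lambda>n. x (\<sigma> (r n))) \<longlonglongrightarrow> y" "(\<lambda>n. x (Suc (\<sigma> (r n)))) \<longlonglongrightarrow> y"
    and W: "(\<lambda>n. Lg (\<sigma> (r n))) \<longlonglongrightarrow> w" and L: "(\<lambda>n. Lf (\<sigma> (r n))) \<longlonglongrightarrow> L"
    and V: "(\<lambda>n. xi (\<sigma> (r n))) \<longlonglongrightarrow> v" and M: "(\<lambda>n. \<nu> (r n)) \<longlonglongrightarrow> \<mu>"
    using convergent_subsequence_of_run[OF \<sigma>(1)] by blast
  define s where "s n = inverse (N (r n))" for n
  have "filterlim (\<lambda>n. N (r n)) at_top sequentially"
    by (rule filterlim_at_top_mono[OF filterlim_real_sequentially])
      (use N(2) r in \<open>meson always_eventually of_nat_le_iff order_trans\<close>)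
  hence "s \<longlonglongrightarrow> 0" unfolding s_def by (rule tendsto_inverse_0_at_top)
  moreover have "0 \<le> s n" for n using N(1)[of "r n"] by (simp add: s_def)
  ultimately have s: "s \<longlonglongrightarrow> 0" "\<And>n. 0 \<le> s n" by blast+
  have "(\<lambda>n. s n *\<^sub>R kkt_multiplier (\<sigma> (r n))) \<longlonglongrightarrow> \<mu>" using M by (simp add: s_def \<nu>_def)
  note kkt = scaled_kkt_limit[OF X W L V s this]
  have "norm \<mu> = 1" using tendsto_norm[OF M] norm_\<nu> by (simp add: LIMSEQ_const_iff)
  moreover have "feas g y" "\<And>i. 0 \<le> w $ i"
    using limit_of_run_data[OF X(1) W L V] params by (auto intro: less_imp_le order_trans)
  moreover obtain d where "\<And>i. g i y = 0 \<Longrightarrow> gradg i y \<bullet> d < 0"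
    using mfcq_direction[OF \<open>feas g y\<close>] by blast
  ultimately obtain z where "(\<Sum>i\<in>UNIV. \<mu> $ i * Gbar g gradg z y w i) < 0"
    using mfcq_excludes_abnormal_multiplier[of g y gradg d \<mu> w, OF _ _ kkt(1) _ kkt(2)] by force
  with kkt(3)[of z] show False by simp
qed

lemma cluster_point_stationary:
  assumes \<sigma>: "\<And>n. \<sigma> n \<ge> n" and lim: "(\<lambda>n. x (\<sigma> n)) \<longlonglongrightarrow> y"
  shows "stationary f gradf P1 P2 g gradg y"
proof -
  obtain B T where B: "\<And>t. t \<ge> T \<Longrightarrow> norm (kkt_multiplier t) \<le> B"
    using kkt_multipliers_eventually_bounded by blast
  define \<rho> where "\<rho> n = \<sigma> (n + T)" for n
  have \<rho>: "\<rho> n \<ge> n" "\<rho> n \<ge> T" for n using \<sigma>[of "n + T"] by (auto simp: \<rho>_def)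
  have "bounded (range (\<lambda>n. kkt_multiplier (\<rho> n)))" using B \<rho>(2) by (auto simp: bounded_iff)
  then obtain r y' w L v \<mu> where r: "\<And>n. r n \<ge> n"
    and X: "(\<lambda>n. x (\<rho> (r n))) \<longlonglongrightarrow> y'" "(\<lambda>n. x (Suc (\<rho> (r n)))) \<longlonglongrightarrow> y'"
    and W: "(\<lambda>n. Lg (\<rho> (r n))) \<longlonglongrightarrow> w" and L: "(\<lambda>n. Lf (\<rho> (r n))) \<longlonglongrightarrow> L"
    and V: "(\<lambda>n. xi (\<rho> (r n))) \<longlonglongrightarrow> v" and M: "(\<lambda>n. kkt_multiplier (\<rho> (r n))) \<longlonglongrightarrow> \<mu>"
    using convergent_subsequence_of_run[OF \<rho>(1)] by blast
  have "(\<lambda>n. x (\<sigma> (r n + T))) \<longlonglongrightarrow> y"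
    using LIMSEQ_compose_ge_index[of "\<lambda>n. r n + T", OF _ lim] r by (simp add: trans_le_add1)
  hence "y' = y" using X(1) by (simp add: \<rho>_def LIMSEQ_unique)
  have s: "(\<lambda>n. 1) \<longlonglongrightarrow> (1::real)" "\<And>n. 0 \<le> (1::real)" by simp_all
  note kkt = scaled_kkt_limit[OF X W L V s, simplified, OF M]
  note data = limit_of_run_data[OF X(1) W L V]
  show ?thesis
    unfolding \<open>y' = y\<close>[symmetric]
  proof (rule stationary_if_base_point_kkt[OF data(1,4)])
    show "0 \<le> L" "\<And>i. 0 \<le> w $ i" using data(2,3) params by (auto intro: order_trans less_imp_le)
  qed (use kkt in auto)
qed

lemma eventually_in_\<Gamma>: "\<exists>T. \<forall>t\<ge>T. x t \<in> \<Gamma>"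
  by (rule eventually_in_open_if_cluster_points_in[OF iterates_bounded \<Gamma>_open])
    (blast intro: \<Gamma>_stationary cluster_point_stationary)

lemma gradP2_eventually_lipschitz:
  "\<exists>K T. \<forall>t\<ge>T. norm (gradP2 (x (Suc t)) - gradP2 (x t)) \<le> K * norm (x (Suc t) - x t)"
  by (rule eventually_lipschitz_on_consecutive_terms[OF iterates_bounded
        successive_differences_tendsto_0 \<Gamma>_open])
    (blast intro: \<Gamma>_stationary cluster_point_stationary, rule gradP2_local_lipschitz)

lemma hessians_bounded: "\<exists>M. \<forall>i t. norm (H i (x t)) \<le> M"
proof -
  obtain R where R: "\<And>t. norm (x t) \<le> R" using iterates_bounded by (auto simp: bounded_iff)
  have "\<exists>M. \<forall>z. norm z \<le> R \<longrightarrow> norm (H i z) \<le> M" for i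
    by (rule continuous_on_UNIV_bounded_on_cball[OF hessian(2)])
  then obtain M where M: "\<And>i z. norm z \<le> R \<Longrightarrow> norm (H i z) \<le> M i" by metis
  have "norm (H i (x t)) \<le> (\<Sum>j\<in>UNIV. \<bar>M j\<bar>)" for i t
    using M[OF R[of t], of i] member_le_sum[of i UNIV "\<lambda>j. \<bar>M j\<bar>"] by simp
  thus ?thesis by blast
qed

text \<open>By the KKT conditions of step t this is, up to a constant, a smooth minorant of Fbar that
  touches it at (x (Suc t), x t, Lg t); the multiplier terms compare the linearized constraints at a
  variable base point with those at x t.\<close>

definition step_minorant :: "nat \<Rightarrow> 'a \<times> 'a \<times> (real^'m) \<Rightarrow> real" where
  "step_minorant t z =
     (\<Sum>i\<in>UNIV. kkt_multiplier t $ i *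
        (Gbar g gradg (fst z) (fst (snd z)) (snd (snd z)) i - Gbar g gradg (fst z) (x t) (Lg t) i))
     + f (fst z) - P2 (fst z) - (gradf (x t) - xi t) \<bullet> (fst z - x t)
     - Lf t / 2 * ((fst z - x t) \<bullet> (fst z - x t))"

definition step_minorant_deriv :: "nat \<Rightarrow> 'a \<times> 'a \<times> (real^'m) \<Rightarrow> real" where
  "step_minorant_deriv t h =
     (let d = x (Suc t) - x t in
      (\<Sum>i\<in>UNIV. kkt_multiplier t $ i *
        (H i (x t) (fst (snd h)) \<bullet> d + snd (snd h) $ i / 2 * (d \<bullet> d) - Lg t $ i * (d \<bullet> fst (snd h))))
      + (gradf (x (Suc t)) - gradP2 (x (Suc t)) - (gradf (x t) - xi t) - Lf t *\<^sub>R d) \<bullet> fst h)"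

lemma Fbar_at_step: "Fbar f P1 P2 g gradg (x (Suc t), x t, Lg t) = ereal (obj (x (Suc t)))"
  using step_solves_sub[of t] by (simp add: Fbar_def solves_sub_def obj_def)

lemma Fbar_step_minorant:
  "Fbar f P1 P2 g gradg (x (Suc t), x t, Lg t)
     + ereal (step_minorant t z - step_minorant t (x (Suc t), x t, Lg t))
   \<le> Fbar f P1 P2 g gradg z"
proof -
  obtain a b w where z: "z = (a, b, w)" by (cases z) auto
  show ?thesis
  proof (cases "\<forall>i. Gbar g gradg a b w i \<le> 0")
    case False
    hence "Fbar f P1 P2 g gradg z = \<infinity>" by (simp add: Fbar_def z)
    thus ?thesis by simp
  next
    case True
    hence "(\<Sum>i\<in>UNIV. kkt_multiplier t $ i * Gbar g gradg a b w i) \<le> 0"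
      using kkt_multiplier(1) by (intro sum_nonpos) (simp add: mult_nonneg_nonpos)
    hence "obj (x (Suc t)) + (step_minorant t z - step_minorant t (x (Suc t), x t, Lg t)) \<le> obj a"
      using kkt_multiplier(3)[of t a]
      by (simp add: step_minorant_def z obj_def sub_obj_def power2_norm_eq_inner
          right_diff_distrib sum_subtractf)
    thus ?thesis using True unfolding Fbar_at_step by (simp add: Fbar_def z obj_def)
  qed
qed

lemma has_derivative_step_minorant:
  assumes "x (Suc t) \<in> \<Gamma>"
  shows "(step_minorant t has_derivative step_minorant_deriv t) (at (x (Suc t), x t, Lg t))"
proof -
  let ?p = "(x (Suc t), x t, Lg t)" and ?d = "x (Suc t) - x t"
  have fst: "(fst has_derivative fst) (at ?p)"
    by (rule bounded_linear_imp_has_derivative[OF bounded_linear_fst])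
  have fst_diff: "((\<lambda>z. fst z - x t) has_derivative fst) (at ?p)"
    using has_derivative_diff[OF fst has_derivative_const[of "x t"]] by simp
  have f: "((\<lambda>z. f (fst z)) has_derivative (\<lambda>h. gradf (x (Suc t)) \<bullet> fst h)) (at ?p)"
    using has_derivative_compose[OF fst f_deriv] by simp
  have P2: "((\<lambda>z. P2 (fst z)) has_derivative (\<lambda>h. gradP2 (x (Suc t)) \<bullet> fst h)) (at ?p)"
    using has_derivative_compose[OF fst P2_deriv[of "fst ?p"]] assms by simp
  have "(step_minorant t has_derivative (\<lambda>h.
      (\<Sum>i\<in>UNIV. kkt_multiplier t $ i * (H i (x t) (fst (snd h)) \<bullet> ?d
         + snd (snd h) $ i / 2 * (?d \<bullet> ?d) - Lg t $ i * (?d \<bullet> fst (snd h))))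
      + gradf (x (Suc t)) \<bullet> fst h - gradP2 (x (Suc t)) \<bullet> fst h - (gradf (x t) - xi t) \<bullet> fst h
      - Lf t / 2 * (?d \<bullet> fst h + fst h \<bullet> ?d))) (at ?p)"
    unfolding step_minorant_def[abs_def]
    by (intro has_derivative_diff has_derivative_add has_derivative_sum has_derivative_mult_right
        has_derivative_Gbar_change_of_base g_deriv hessian(1) f P2
        has_derivative_inner[OF has_derivative_const fst_diff, simplified]
        has_derivative_inner[OF fst_diff fst_diff, simplified])
  thus ?thesis
    by (rule has_derivative_eq_rhs)
      (auto simp: fun_eq_iff step_minorant_deriv_def Let_def inner_diff_left inner_diff_right
        inner_add_left inner_add_right inner_commute field_simps intro!: sum.cong)
qed

lemma step_minorant_deriv_bound:
  assumes \<Gamma>: "x t \<in> \<Gamma>" and B: "norm (kkt_multiplier t) \<le> B"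
    and K: "norm (gradP2 (x (Suc t)) - gradP2 (x t)) \<le> K * norm (x (Suc t) - x t)"
    and MH: "\<And>i. norm (H i (x t)) \<le> MH" and \<Delta>: "norm (x (Suc t) - x t) \<le> \<Delta>"
  shows "\<bar>step_minorant_deriv t h\<bar>
    \<le> (Lfl + K + Lf_max + of_nat CARD('m) * (B * (MH + \<Delta> / 2 + Lg_max))) * norm (x (Suc t) - x t) * norm h"
proof -
  let ?d = "x (Suc t) - x t"
  define V where "V = gradf (x (Suc t)) - gradP2 (x (Suc t)) - (gradf (x t) - xi t) - Lf t *\<^sub>R ?d"
  have "xi t = gradP2 (x t)" by (rule subgradient_eq_gradient[OF xi_subgradient P2_deriv[OF \<Gamma>(1)]])
  hence V_eq: "V = (gradf (x (Suc t)) - gradf (x t)) - (gradP2 (x (Suc t)) - gradP2 (x t)) - Lf t *\<^sub>R ?d"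
    by (simp add: V_def algebra_simps)
  have "norm V \<le> norm (gradf (x (Suc t)) - gradf (x t)) + norm (gradP2 (x (Suc t)) - gradP2 (x t))
      + norm (Lf t *\<^sub>R ?d)"
    unfolding V_eq using norm_triangle_ineq4[of "gradf (x (Suc t)) - gradf (x t) - (gradP2 (x (Suc t)) - gradP2 (x t))"
        "Lf t *\<^sub>R ?d"]
      norm_triangle_ineq4[of "gradf (x (Suc t)) - gradf (x t)" "gradP2 (x (Suc t)) - gradP2 (x t)"]
    by linarith
  also have "\<dots> \<le> Lfl * norm ?d + K * norm ?d + Lf_max * norm ?d"
  proof (intro add_mono)
    show "norm (gradf (x (Suc t)) - gradf (x t)) \<le> Lfl * norm ?d" by (rule gradf_lipschitz(2))
    show "norm (Lf t *\<^sub>R ?d) \<le> Lf_max * norm ?d"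
      using Lf_bounds[of t] params by (simp add: mult_right_mono)
  qed (rule K)
  finally have V: "norm V \<le> (Lfl + K + Lf_max) * norm ?d" by (simp add: algebra_simps)
  have Lg: "\<bar>Lg t $ i\<bar> \<le> Lg_max" for i using Lg_bounds[of t i] Lg_nonneg[of t i] by simp
  obtain hx hy hw where h: "h = (hx, hy, hw)" by (cases h)
  have "step_minorant_deriv t h = (\<Sum>i\<in>UNIV. kkt_multiplier t $ i *
      (H i (x t) hy \<bullet> ?d + hw $ i / 2 * (?d \<bullet> ?d) - Lg t $ i * (?d \<bullet> hy))) + V \<bullet> hx"
    by (simp add: h step_minorant_deriv_def V_def Let_def)
  thus ?thesis using minorant_derivative_bound[OF h MH Lg B \<Delta> V] by simp
qed

lemma step_subgradient_bound:
  assumes \<Gamma>: "x t \<in> \<Gamma>" "x (Suc t) \<in> \<Gamma>" and B: "norm (kkt_multiplier t) \<le> B"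
    and K: "norm (gradP2 (x (Suc t)) - gradP2 (x t)) \<le> K * norm (x (Suc t) - x t)"
    and MH: "\<And>i. norm (H i (x t)) \<le> MH" and \<Delta>: "norm (x (Suc t) - x t) \<le> \<Delta>"
  shows "\<exists>v\<in>lim_subdiff (Fbar f P1 P2 g gradg) (x (Suc t), x t, Lg t).
    norm v \<le> (Lfl + K + Lf_max + of_nat CARD('m) * (B * (MH + \<Delta> / 2 + Lg_max))) * norm (x (Suc t) - x t)"
proof -
  have deriv: "(step_minorant t has_derivative step_minorant_deriv t) (at (x (Suc t), x t, Lg t))"
    by (rule has_derivative_step_minorant[OF \<Gamma>(2)])
  hence "linear (step_minorant_deriv t)"
    using has_derivative_bounded_linear bounded_linear.linear by blast
  then obtain v where v: "\<And>h. step_minorant_deriv t h = v \<bullet> h"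
    and nv: "norm v \<le> (Lfl + K + Lf_max + of_nat CARD('m) * (B * (MH + \<Delta> / 2 + Lg_max))) * norm (x (Suc t) - x t)"
    using linear_functional_inner_representation[OF _ step_minorant_deriv_bound[OF \<Gamma>(1) B K MH \<Delta>]] by blast
  have "step_minorant_deriv t = (\<lambda>h. v \<bullet> h)" using v by blast
  with deriv have dv: "(step_minorant t has_derivative (\<lambda>h. v \<bullet> h)) (at (x (Suc t), x t, Lg t))"
    by simp
  have "\<bar>Fbar f P1 P2 g gradg (x (Suc t), x t, Lg t)\<bar> \<noteq> \<infinity>" by (simp add: Fbar_at_step)
  hence "v \<in> frechet_subdiff (Fbar f P1 P2 g gradg) (x (Suc t), x t, Lg t)"
    by (rule frechet_subdiff_of_smooth_minorant[where H="Fbar f P1 P2 g gradg" and R="step_minorant t",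
          OF _ dv Fbar_step_minorant[of t]])
  thus ?thesis using nv frechet_subdiff_imp_lim_subdiff by blast
qed

lemma eventual_subgradient_bound:
  "\<exists>\<kappa>>0. \<exists>t0::nat. t0 \<ge> 1 \<and>
     (\<forall>t>t0. lim_subdiff (Fbar f P1 P2 g gradg) (x (Suc t), x t, Lg t) \<noteq> {} \<and>
             infdist 0 (lim_subdiff (Fbar f P1 P2 g gradg) (x (Suc t), x t, Lg t))
               \<le> \<kappa> * norm (x (Suc t) - x t))"
proof -
  obtain B T\<^sub>1 where B: "\<And>t. t \<ge> T\<^sub>1 \<Longrightarrow> norm (kkt_multiplier t) \<le> B"
    using kkt_multipliers_eventually_bounded by blast
  obtain K T\<^sub>2 where K: "\<And>t. t \<ge> T\<^sub>2 \<Longrightarrow>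
      norm (gradP2 (x (Suc t)) - gradP2 (x t)) \<le> K * norm (x (Suc t) - x t)"
    using gradP2_eventually_lipschitz by blast
  obtain T\<^sub>3 where \<Gamma>: "\<And>t. t \<ge> T\<^sub>3 \<Longrightarrow> x t \<in> \<Gamma>" using eventually_in_\<Gamma> by blast
  from LIMSEQ_D[OF successive_differences_tendsto_0 zero_less_one]
  obtain T\<^sub>4 where "\<forall>t\<ge>T\<^sub>4. norm (x (Suc t) - x t) < 1" by auto
  hence small: "\<And>t. t \<ge> T\<^sub>4 \<Longrightarrow> norm (x (Suc t) - x t) \<le> 1" by (simp add: less_imp_le)
  obtain MH where MH: "\<And>i t. norm (H i (x t)) \<le> MH" using hessians_bounded by blast
  define \<kappa> where "\<kappa> = Lfl + \<bar>K\<bar> + Lf_max + of_nat CARD('m) * (\<bar>B\<bar> * (\<bar>MH\<bar> + 1 / 2 + Lg_max))"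
  define t0 where "t0 = Suc (max (max T\<^sub>1 T\<^sub>2) (max T\<^sub>3 T\<^sub>4))"
  have "0 \<le> of_nat CARD('m) * (\<bar>B\<bar> * (\<bar>MH\<bar> + 1 / 2 + Lg_max))" using Lg_max_pos by simp
  hence "\<kappa> > 0" unfolding \<kappa>_def using gradf_lipschitz(1) Lf_max_pos by linarith
  moreover have "lim_subdiff (Fbar f P1 P2 g gradg) (x (Suc t), x t, Lg t) \<noteq> {} \<and>
      infdist 0 (lim_subdiff (Fbar f P1 P2 g gradg) (x (Suc t), x t, Lg t)) \<le> \<kappa> * norm (x (Suc t) - x t)"
    if "t > t0" for t
  proof -
    have t: "T\<^sub>1 \<le> t" "T\<^sub>2 \<le> t" "T\<^sub>3 \<le> t" "T\<^sub>4 \<le> t" using that by (auto simp: t0_def)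
    have Bt: "norm (kkt_multiplier t) \<le> \<bar>B\<bar>" using B[OF t(1)] by linarith
    have "K * norm (x (Suc t) - x t) \<le> \<bar>K\<bar> * norm (x (Suc t) - x t)" by (intro mult_right_mono) auto
    with K[OF t(2)] have Kt: "norm (gradP2 (x (Suc t)) - gradP2 (x t)) \<le> \<bar>K\<bar> * norm (x (Suc t) - x t)"
      by (rule order_trans)
    have MHt: "norm (H i (x t)) \<le> \<bar>MH\<bar>" for i using MH[of i t] by linarith
    have "\<exists>v\<in>lim_subdiff (Fbar f P1 P2 g gradg) (x (Suc t), x t, Lg t).
        norm v \<le> \<kappa> * norm (x (Suc t) - x t)"
      unfolding \<kappa>_def
      by (rule step_subgradient_bound[OF \<Gamma>[OF t(3)] \<Gamma>[OF le_SucI[OF t(3)]] Bt Kt MHt small[OF t(4)]])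
    then obtain v where v: "v \<in> lim_subdiff (Fbar f P1 P2 g gradg) (x (Suc t), x t, Lg t)"
      and "norm v \<le> \<kappa> * norm (x (Suc t) - x t)" by blast
    moreover have "infdist 0 (lim_subdiff (Fbar f P1 P2 g gradg) (x (Suc t), x t, Lg t)) \<le> norm v"
      using infdist_le[OF v, of 0] by simp
    ultimately show ?thesis by auto
  qed
  ultimately show ?thesis by (intro exI[of _ \<kappa>] conjI exI[of _ t0]) (auto simp: t0_def)
qed

end

lemma lipschitz_bound_max_0:
  fixes F :: "'a::real_normed_vector \<Rightarrow> 'b::real_normed_vector"
  assumes "\<forall>y z. norm (F y - F z) \<le> L * norm (y - z)"
  shows "norm (F y - F z) \<le> max L 0 * norm (y - z)"
proof -
  have "L * norm (y - z) \<le> max L 0 * norm (y - z)" by (intro mult_right_mono) auto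
  thus ?thesis using assms by (meson order_trans)
qed

lemma assumption_A_nonneg_lipschitz_constants:
  assumes "assumption_A f gradf P1 P2 g gradg"
  obtains Lfl Lgl where "Lfl \<ge> 0" "\<And>y z. norm (gradf y - gradf z) \<le> Lfl * norm (y - z)"
    "\<And>i. Lgl i \<ge> 0" "\<And>i y z. norm (gradg i y - gradg i z) \<le> Lgl i * norm (y - z)"
proof -
  note A = assms[unfolded assumption_A_def]
  obtain Lf0 where Lf0: "\<forall>y z. norm (gradf y - gradf z) \<le> Lf0 * norm (y - z)"
    using A[THEN conjunct1] by blast
  have "\<forall>i. \<exists>L. \<forall>y z. norm (gradg i y - gradg i z) \<le> L * norm (y - z)"
    using A[THEN conjunct2, THEN conjunct1] by simp
  from choice[OF this] obtain Lg0
    where Lg0: "\<forall>i. \<forall>y z. norm (gradg i y - gradg i z) \<le> Lg0 i * norm (y - z)" ..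
  show ?thesis
  proof (rule that[of "max Lf0 0" "\<lambda>i. max (Lg0 i) 0"])
    show "norm (gradf y - gradf z) \<le> max Lf0 0 * norm (y - z)" for y z
      using Lf0 by (rule lipschitz_bound_max_0)
    show "norm (gradg i y - gradg i z) \<le> max (Lg0 i) 0 * norm (y - z)" for i y z
      using Lg0 by (intro lipschitz_bound_max_0) simp
  qed simp_all
qed

lemma scp_ls_run_if_assumptions:
  assumes "problem_P f gradf P1 P2 g" "assumption_A f gradf P1 P2 g gradg" "assumption_B g gradg"
    "assumption_C g gradg" "assumption_D f gradf P1 P2 g gradg" "c > 0" "0 < Lmin" "tau > 1"
    "SCP_ls f gradf P1 P2 g gradg c Lmin Lmax tau x Lf Lg"
  obtains xi J TLf TLg Tx Lfl Lgl H \<Gamma> gradP2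
  where "scp_ls_run f P1 P2 gradf g gradg c Lmin Lmax tau x Lf Lg xi J TLf TLg Tx Lfl Lgl H \<Gamma> gradP2"
proof -
  obtain Lfl Lgl where Lfl: "Lfl \<ge> 0" "\<And>y z. norm (gradf y - gradf z) \<le> Lfl * norm (y - z)"
    and Lgl: "\<And>i. Lgl i \<ge> 0" "\<And>i y z. norm (gradg i y - gradg i z) \<le> Lgl i * norm (y - z)"
    using assumption_A_nonneg_lipschitz_constants[OF assms(2)] by blast
  have level: "bounded {z. Fobj f P1 P2 g z \<le> ereal \<alpha>}" for \<alpha>
    using assms(2) unfolding assumption_A_def by blast
  have "\<forall>i. \<exists>Hi. (\<forall>z. (gradg i has_derivative blinfun_apply (Hi z)) (at z)) \<and> continuous_on UNIV Hi"
    using assms(4) unfolding assumption_C_def by simp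
  from choice[OF this] obtain H
    where "\<forall>i. (\<forall>z. (gradg i has_derivative blinfun_apply (H i z)) (at z)) \<and> continuous_on UNIV (H i)" ..
  hence H: "(gradg i has_derivative blinfun_apply (H i z)) (at z)" "continuous_on UNIV (H i)" for i z
    by auto
  obtain \<Gamma> gradP2 where "open \<Gamma>" and "{z. stationary f gradf P1 P2 g gradg z} \<subseteq> \<Gamma>"
    and "\<forall>z\<in>\<Gamma>. (P2 has_derivative (\<lambda>h. gradP2 z \<bullet> h)) (at z)"
    and "\<forall>z\<in>\<Gamma>. \<exists>e>0. \<exists>K. \<forall>y\<in>ball z e \<inter> \<Gamma>. \<forall>w\<in>ball z e \<inter> \<Gamma>.
       norm (gradP2 y - gradP2 w) \<le> K * norm (y - w)"
    using assms(5) unfolding assumption_D_def by blast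
  hence \<Gamma>: "open \<Gamma>" "\<And>z. stationary f gradf P1 P2 g gradg z \<Longrightarrow> z \<in> \<Gamma>"
    "\<And>z. z \<in> \<Gamma> \<Longrightarrow> (P2 has_derivative (\<lambda>h. gradP2 z \<bullet> h)) (at z)"
    "\<And>z. z \<in> \<Gamma> \<Longrightarrow> \<exists>e>0. \<exists>K. \<forall>y\<in>ball z e \<inter> \<Gamma>. \<forall>w\<in>ball z e \<inter> \<Gamma>.
       norm (gradP2 y - gradP2 w) \<le> K * norm (y - w)"
    by auto
  obtain xi J TLf TLg Tx where x0: "feas g (x 0)"
    and trace: "line_search_trace f gradf P1 P2 g gradg c Lmin Lmax tau x Lf Lg xi J TLf TLg Tx"
    using assms(9) unfolding SCP_ls_iff_line_search_trace by blast
  show ?thesis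
    by (rule that, unfold_locales) (fact assms(1,3,6-8) Lfl Lgl level H \<Gamma> x0 trace)+
qed

theorem mainTheorem6:
  fixes f P1 P2 :: "'a::euclidean_space \<Rightarrow> real"
    and gradf :: "'a \<Rightarrow> 'a"
    and g :: "'m::finite \<Rightarrow> 'a \<Rightarrow> real"
    and gradg :: "'m \<Rightarrow> 'a \<Rightarrow> 'a"
    and c Lmin Lmax tau :: real
    and x :: "nat \<Rightarrow> 'a" and Lf :: "nat \<Rightarrow> real" and Lg :: "nat \<Rightarrow> real^'m"
  assumes "problem_P f gradf P1 P2 g"
    and "assumption_A f gradf P1 P2 g gradg"
    and "assumption_B g gradg"
    and "assumption_C g gradg"
    and "assumption_D f gradf P1 P2 g gradg"
    and "c > 0" and "0 < Lmin" and "Lmin < Lmax" and "tau > 1"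
    and "SCP_ls f gradf P1 P2 g gradg c Lmin Lmax tau x Lf Lg"
  shows "\<exists>\<kappa>>0. \<exists>t0::nat. t0 \<ge> 1 \<and>
           (\<forall>t>t0. lim_subdiff (Fbar f P1 P2 g gradg) (x (Suc t), x t, Lg t) \<noteq> {} \<and>
                   infdist 0 (lim_subdiff (Fbar f P1 P2 g gradg) (x (Suc t), x t, Lg t))
                     \<le> \<kappa> * norm (x (Suc t) - x t))"
proof -
  obtain xi J TLf TLg Tx Lfl Lgl H \<Gamma> gradP2
    where "scp_ls_run f P1 P2 gradf g gradg c Lmin Lmax tau x Lf Lg xi J TLf TLg Tx Lfl Lgl H \<Gamma> gradP2"
    using scp_ls_run_if_assumptions[OF assms(1-7,9,10)] by blast
  thus ?thesis by (rule scp_ls_run.eventual_subgradient_bound)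
qed

end
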